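(* Assume the setting described in the context and let $\theta=(\theta_1,\dots,\theta_{\mathfrak d})\in\mathbb R^{\mathfrak d}$. Write $x=(x_1,\dots,x_{\ell_0})$ for points of $[a,b]^{\ell_0}$, let empty products equal $1$, and for $k\in\{1,\dots,L\}$ let $\sum_{v_k,\dots,v_L}$ denote the sum over all $(v_k,v_{k+1},\dots,v_L)\in\mathbb N^{L-k+1}$ with $v_w\le\ell_w$ for all $w\in\{k,\dots,L\}$. Then (i) for all $r\in[1,\infty)$ it holds that $\mathcal L_r\in C^1(\mathbb R^{\mathfrak d},\mathbb R)$; (ii) for all $r\in[1,\infty)$, $k\in\{1,\dots,L\}$, $i\in\{1,\dots,\ell_k\}$, $j\in\{1,\dots,\ell_{k-1}\}$, $$\Big(\tfrac{\partial\mathcal L_r}{\partial\theta_{(i-1)\ell_{k-1}+j+\mathbf d_{k-1}}}\Big)(\theta)=\sum_{v_k,\dots,v_L}\int_{[a,b]^{\ell_0}}2\Big[\mathscr R_{r^{1/\max\{k-1,1\}}}(\mathcal N^{\max\{k-1,1\},\theta}_{r,j}(x))\mathbf 1_{(1,L]}(k)+x_j\mathbf 1_{\{1\}}(k)\Big]\mathbf 1_{\{i\}}(v_k)\Big[\mathcal N^{L,\theta}_{r,v_L}(x)-f_{v_L}(x)\Big]\prod_{n=k+1}^L\Big(\mathfrak w^{n,\theta}_{v_n,v_{n-1}}(\mathscr R_{r^{1/(n-1)}})'(\mathcal N^{n-1,\theta}_{r,v_{n-1}}(x))\Big)\,\mu(dx);$$ (iii) for all $r\in[1,\infty)$, $k\in\{1,\dots,L\}$,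 $i\in\{1,\dots,\ell_k\}$, $$\Big(\tfrac{\partial\mathcal L_r}{\partial\theta_{\ell_k\ell_{k-1}+i+\mathbf d_{k-1}}}\Big)(\theta)=\sum_{v_k,\dots,v_L}\int_{[a,b]^{\ell_0}}2\,\mathbf 1_{\{i\}}(v_k)\Big[\mathcal N^{L,\theta}_{r,v_L}(x)-f_{v_L}(x)\Big]\prod_{n=k+1}^L\Big(\mathfrak w^{n,\theta}_{v_n,v_{n-1}}(\mathscr R_{r^{1/(n-1)}})'(\mathcal N^{n-1,\theta}_{r,v_{n-1}}(x))\Big)\,\mu(dx);$$ (iv) $\limsup_{r\to\infty}\big(|\mathcal L_r(\theta)-\mathcal L_\infty(\theta)|+\|(\nabla\mathcal L_r)(\theta)-\mathcal G(\theta)\|\big)=0$; (v) for all $k\in\{1,\dots,L\}$, $i\in\{1,\dots,\ell_k\}$, $j\in\{1,\dots,\ell_{k-1}\}$, $$\mathcal G_{(i-1)\ell_{k-1}+j+\mathbf d_{k-1}}(\theta)=\sum_{v_k,\dots,v_L}\int_{[a,b]^{\ell_0}}2\Big[\mathscr R_\infty(\mathcal N^{\max\{k-1,1\},\theta}_{\infty,j}(x))\mathbf 1_{(1,L]}(k)+x_j\mathbf 1_{\{1\}}(k)\Big]\mathbf 1_{\{i\}}(v_k)\Big[\mathcal N^{L,\theta}_{\infty,v_L}(x)-f_{v_L}(x)\Big]\prod_{n=k+1}^L\Big(\mathfrak w^{n,\theta}_{v_n,v_{n-1}}\mathbf 1_{\mathcal X^{n-1,\theta}_{v_{n-1}}}(x)\Big)\,\mu(dx);$$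 (vi) for all $k\in\{1,\dots,L\}$, $i\in\{1,\dots,\ell_k\}$, $$\mathcal G_{\ell_k\ell_{k-1}+i+\mathbf d_{k-1}}(\theta)=\sum_{v_k,\dots,v_L}\int_{[a,b]^{\ell_0}}2\,\mathbf 1_{\{i\}}(v_k)\Big[\mathcal N^{L,\theta}_{\infty,v_L}(x)-f_{v_L}(x)\Big]\prod_{n=k+1}^L\Big(\mathfrak w^{n,\theta}_{v_n,v_{n-1}}\mathbf 1_{\mathcal X^{n-1,\theta}_{v_{n-1}}}(x)\Big)\,\mu(dx).$$
   Context: Setting. Let $L,\mathfrak d\in\mathbb N=\{1,2,\dots\}$, $(\ell_k)_{k\in\mathbb N_0}\subseteq\mathbb N$, $a\in\mathbb R$, $b\in(a,\infty)$, $\mathscr A\in(0,\infty)$, $\mathscr B\in(\mathscr A,\infty)$ with $\mathfrak d=\sum_{k=1}^L\ell_k(\ell_{k-1}+1)$; let $\mathbf a=\max\{|a|,|b|,1\}$ and $\mathbf d_k=\sum_{h=1}^k\ell_h(\ell_{h-1}+1)$ for $k\in\mathbb N_0$. For $\theta=(\theta_1,\dots,\theta_{\mathfrak d})\in\mathbb R^{\mathfrak d}$, $k\in\{1,\dots,L\}$, $i\in\{1,\dots,\ell_k\}$, $j\in\{1,\dots,\ell_{k-1}\}$ let $\mathfrak w^{k,\theta}_{i,j}=\theta_{(i-1)\ell_{k-1}+j+\mathbf d_{k-1}}$ and $\mathfrak b^{k,\theta}_i=\theta_{\ell_k\ell_{k-1}+i+\mathbf d_{k-1}}$, let $\mathfrak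 w^{k,\theta}=(\mathfrak w^{k,\theta}_{i,j})_{i,j}\in\mathbb R^{\ell_k\times\ell_{k-1}}$, $\mathfrak b^{k,\theta}=(\mathfrak b^{k,\theta}_1,\dots,\mathfrak b^{k,\theta}_{\ell_k})\in\mathbb R^{\ell_k}$, and $\mathcal A^\theta_k\colon\mathbb R^{\ell_{k-1}}\to\mathbb R^{\ell_k}$, $\mathcal A^\theta_k(x)=\mathfrak b^{k,\theta}+\mathfrak w^{k,\theta}x$. Let $\mathscr R_\infty(x)=\max\{x,0\}$ and let $\mathscr R_r\colon\mathbb R\to\mathbb R$, $r\in[1,\infty)$, satisfy for all $r\in[1,\infty)$: $\mathscr R_r\in C^1(\mathbb R,\mathbb R)$, $\mathscr R_r(x)=0$ for all $x\le\mathscr A r^{-1}$, $0\le\mathscr R_r(y)\le\max\{y,0\}$ for all $y\in\mathbb R$, $\mathscr R_r(z)=z$ for all $z\ge\mathscr B r^{-1}$; assume $\sup_{r\in[1,\infty)}\sup_{x\in\mathbb R}|(\mathscr R_r)'(x)|<\infty$. $\|\cdot\|$, $\langle\cdot,\cdot\rangle$ are the Euclidean norm and scalar product on each $\mathbb R^n$; for $r\in[1,\infty]$, $\mathfrak M_r(x_1,\dots,x_n)=(\mathscr R_r(x_1),\dots,\mathscr R_r(x_n))$. For $r\in[1,\infty]$, $\theta\in\mathbb R^{\mathfrak d}$ define $\mathcal N^{k,\theta}_r=(\mathcal N^{k,\theta}_{r,1},\dots,\mathcal N^{k,\theta}_{r,\ell_k})\colon\mathbb R^{\ell_0}\to\mathbb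 R^{\ell_k}$, $k\in\{1,\dots,L\}$, by $\mathcal N^{1,\theta}_r=\mathcal A^\theta_1$ and $\mathcal N^{k+1,\theta}_r(x)=\mathcal A^\theta_{k+1}(\mathfrak M_{r^{1/k}}(\mathcal N^{k,\theta}_r(x)))$ (with $\infty^{1/k}=\infty$), and let $\mathcal X^{k,\theta}_i=\{y\in[a,b]^{\ell_0}\colon\mathcal N^{k,\theta}_{\infty,i}(y)>0\}$. Let $\mu$ be a measure on the Borel $\sigma$-algebra of $[a,b]^{\ell_0}$ with $\mathfrak m=\mu([a,b]^{\ell_0})\in\mathbb R$, let $f=(f_1,\dots,f_{\ell_L})\colon[a,b]^{\ell_0}\to\mathbb R^{\ell_L}$ be measurable, and for $r\in[1,\infty]$ let $\mathcal L_r\colon\mathbb R^{\mathfrak d}\to\mathbb R$ be given by $\mathcal L_r(\theta)=\int_{[a,b]^{\ell_0}}\|\mathcal N^{L,\theta}_r(x)-f(x)\|^2\,\mu(dx)$ (these integrals are real numbers as part of the setting). Let $\mathcal G=(\mathcal G_1,\dots,\mathcal G_{\mathfrak d})\colon\mathbb R^{\mathfrak d}\to\mathbb R^{\mathfrak d}$ satisfy $\mathcal G(\theta)=\lim_{r\to\infty}(\nabla\mathcal L_r)(\theta)$ for every $\theta$ for which $((\nabla\mathcal L_r)(\theta))_{r\in[1,\infty)}$ is convergent as $r\to\infty$. *)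

theory Defs
  imports "HOL-Analysis.Analysis"
begin

text \<open>Parameter vectors theta are read through their coordinates theta_1, ..., theta_d,
  given as a function nat => real (only indices 1..d are used).\<close>

definition dsum :: "(nat \<Rightarrow> nat) \<Rightarrow> nat \<Rightarrow> nat" where
  "dsum l k = (\<Sum>h = 1..k. l h * (l (h - 1) + 1))"

definition wgt :: "(nat \<Rightarrow> nat) \<Rightarrow> (nat \<Rightarrow> real) \<Rightarrow> nat \<Rightarrow> nat \<Rightarrow> nat \<Rightarrow> real" where
  "wgt l \<theta> k i j = \<theta> ((i - 1) * l (k - 1) + j + dsum l (k - 1))"

definition bias :: "(nat \<Rightarrow> nat) \<Rightarrow> (nat \<Rightarrow> real) \<Rightarrow> nat \<Rightarrow> nat \<Rightarrow> real" where
  "bias l \<theta> k i = \<theta> (l k * l (k - 1) + i + dsum l (k - 1))"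

text \<open>Realization: net l theta act k x i is the i-th component of N^{k,theta}(x), where
  act k is the activation applied (componentwise) to the output of layer k.
  Inputs x :: nat => real with components x_1..x_{l_0}.  (Layer 0 is unused.)\<close>

fun net :: "(nat \<Rightarrow> nat) \<Rightarrow> (nat \<Rightarrow> real) \<Rightarrow> (nat \<Rightarrow> real \<Rightarrow> real) \<Rightarrow> nat \<Rightarrow> (nat \<Rightarrow> real) \<Rightarrow> nat \<Rightarrow> real" where
  "net l \<theta> act 0 x i = 0"
| "net l \<theta> act (Suc 0) x i = bias l \<theta> 1 i + (\<Sum>j = 1..l 0. wgt l \<theta> 1 i j * x j)"
| "net l \<theta> act (Suc (Suc k)) x i =
     bias l \<theta> (Suc (Suc k)) i
     + (\<Sum>j = 1..l (Suc k). wgt l \<theta> (Suc (Suc k)) i j * act (Suc k) (net l \<theta> act (Suc k) x j))"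

definition relu :: "real \<Rightarrow> real" where
  "relu x = max x 0"

definition actR :: "(real \<Rightarrow> real \<Rightarrow> real) \<Rightarrow> real \<Rightarrow> nat \<Rightarrow> real \<Rightarrow> real" where
  "actR R r k = R (r powr (1 / real k))"

definition actInf :: "nat \<Rightarrow> real \<Rightarrow> real" where
  "actInf k = relu"

definition coords :: "(nat \<Rightarrow> 'd) \<Rightarrow> real^'d \<Rightarrow> nat \<Rightarrow> real" where
  "coords idx v p = v $ idx p"

definition loss :: "(nat \<Rightarrow> nat) \<Rightarrow> nat \<Rightarrow> (nat \<Rightarrow> real) measure \<Rightarrow> ((nat \<Rightarrow> real) \<Rightarrow> nat \<Rightarrow> real)
    \<Rightarrow> (nat \<Rightarrow> real \<Rightarrow> real) \<Rightarrow> (nat \<Rightarrow> real) \<Rightarrow> real" where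
  "loss l L \<mu> f act \<theta> = (\<integral>x. (\<Sum>i = 1..l L. (net l \<theta> act L x i - f x i)\<^sup>2) \<partial>\<mu>)"

definition grad :: "(real^'d \<Rightarrow> real) \<Rightarrow> real^'d \<Rightarrow> real^'d" where
  "grad F x = (THE g. (F has_derivative (\<lambda>h. g \<bullet> h)) (at x))"

end

theory Submission
  imports Defs
begin

(* For finite r the loss is the integral of a C^1 function of the parameters whose derivative
   is dominated, locally uniformly in the parameters, by an integrable function, so it may be
   differentiated under the integral sign. The derivative of the network along a coordinate
   direction of layer k vanishes below layer k and is propagated linearly above it, which
   expands into the sums over neuron paths of (ii) and (iii).

   Since R_r vanishes on (-oo, A/r] and is the identity on [B/r, oo), at every fixed point the
   smoothed activations agree with ReLU, and their derivatives with the indicator of (0, oo),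
   for all large r. So at every input the smoothed network, its directional derivatives and
   the integrands of the loss and of its gradient eventually coincide with their ReLU
   counterparts; dominated convergence yields (iv), and the limit of the gradient, which is
   G by definition, is the ReLU path sum of (v) and (vi). *)

section \<open>Differentiation under the integral sign\<close>

lemma tendsto_integral_at_dominated:
  fixes s :: "'a::first_countable_topology \<Rightarrow> 'b \<Rightarrow> real"
  assumes s_meas: "\<And>y. s y \<in> borel_measurable M" and f_meas: "f \<in> borel_measurable M"
    and w: "integrable M w"
    and lim: "\<And>x. x \<in> space M \<Longrightarrow> ((\<lambda>y. s y x) \<longlongrightarrow> f x) (at z)"
    and dom: "\<forall>\<^sub>F y in at z. \<forall>x\<in>space M. \<bar>s y x\<bar> \<le> w x"
  shows "((\<lambda>y. \<integral>x. s y x \<partial>M) \<longlongrightarrow> (\<integral>x. f x \<partial>M)) (at z)"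
  unfolding tendsto_at_iff_sequentially
proof (intro allI impI)
  fix X :: "nat \<Rightarrow> 'a" assume "\<forall>i. X i \<in> UNIV - {z}" and "X \<longlonglongrightarrow> z"
  then have X: "filterlim X (at z) sequentially"
    by (auto simp: filterlim_at)
  from filterlim_iff[THEN iffD1, OF X, rule_format, OF dom]
  obtain N where N: "\<And>n. N \<le> n \<Longrightarrow> \<forall>x\<in>space M. \<bar>s (X n) x\<bar> \<le> w x"
    by (auto simp: eventually_sequentially)
  show "((\<lambda>y. \<integral>x. s y x \<partial>M) \<circ> X) \<longlonglongrightarrow> (\<integral>x. f x \<partial>M)"
    unfolding comp_def
  proof (rule LIMSEQ_offset, rule integral_dominated_convergence[where w=w])
    show "AE x in M. norm (s (X (n + N)) x) \<le> w x" for n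
      using N[of "n + N"] by (auto intro!: AE_I2)
    show "AE x in M. (\<lambda>n. s (X (n + N)) x) \<longlonglongrightarrow> f x"
    proof (rule AE_I2)
      fix x assume "x \<in> space M"
      then have "(\<lambda>n. s (X n) x) \<longlonglongrightarrow> f x"
        using filterlim_compose[OF lim X] by simp
      then show "(\<lambda>n. s (X (n + N)) x) \<longlonglongrightarrow> f x"
        by (rule LIMSEQ_ignore_initial_segment)
    qed
  qed (use s_meas f_meas w in auto)
qed

lemma integrable_dominated_linear:
  fixes T :: "'b \<Rightarrow> 'a::real_normed_vector \<Rightarrow> real"
  assumes meas: "(\<lambda>x. T x h) \<in> borel_measurable M" and g: "integrable M g"
    and dom: "\<And>x. x \<in> space M \<Longrightarrow> \<bar>T x h\<bar> \<le> g x * norm h"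
  shows "integrable M (\<lambda>x. T x h)"
proof (rule Bochner_Integration.integrable_bound[OF _ meas])
  show "integrable M (\<lambda>x. g x * norm h)" using g by simp
  show "AE x in M. norm (T x h) \<le> norm (g x * norm h)"
    using dom by (intro AE_I2) force
qed

lemma bounded_linear_integral_dominated:
  fixes T :: "'b \<Rightarrow> 'a::real_normed_vector \<Rightarrow> real"
  assumes lin: "\<And>x. x \<in> space M \<Longrightarrow> linear (T x)"
    and meas: "\<And>h. (\<lambda>x. T x h) \<in> borel_measurable M" and g: "integrable M g"
    and dom: "\<And>x h. x \<in> space M \<Longrightarrow> \<bar>T x h\<bar> \<le> g x * norm h"
  shows "bounded_linear (\<lambda>h. \<integral>x. T x h \<partial>M)"
proof -
  have int: "integrable M (\<lambda>x. T x h)" for h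
    using integrable_dominated_linear[OF meas g dom] .
  show ?thesis
  proof (rule bounded_linear_intro[where K="\<integral>x. g x \<partial>M"])
    fix h1 h2
    have "(\<integral>x. T x (h1 + h2) \<partial>M) = (\<integral>x. T x h1 + T x h2 \<partial>M)"
      by (rule Bochner_Integration.integral_cong) (auto simp: linear_add[OF lin])
    then show "(\<integral>x. T x (h1 + h2) \<partial>M) = (\<integral>x. T x h1 \<partial>M) + (\<integral>x. T x h2 \<partial>M)"
      using int by simp
  next
    fix c h
    have "(\<integral>x. T x (c *\<^sub>R h) \<partial>M) = (\<integral>x. c * T x h \<partial>M)"
      by (rule Bochner_Integration.integral_cong) (auto simp: linear_scale[OF lin])
    then show "(\<integral>x. T x (c *\<^sub>R h) \<partial>M) = c *\<^sub>R (\<integral>x. T x h \<partial>M)" by simp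
  next
    fix h
    have "norm (\<integral>x. T x h \<partial>M) \<le> (\<integral>x. norm (T x h) \<partial>M)"
      by (rule integral_norm_bound)
    also have "\<dots> \<le> (\<integral>x. g x * norm h \<partial>M)"
      using dom int g by (intro integral_mono) auto
    finally show "norm (\<integral>x. T x h \<partial>M) \<le> norm h * (\<integral>x. g x \<partial>M)" by (simp add: mult.commute)
  qed
qed

lemma abs_linearization_error_le:
  fixes F :: "'a::{real_normed_vector, perfect_space} \<Rightarrow> real"
  assumes der: "\<And>v. v \<in> ball v0 e \<Longrightarrow> (F has_derivative F' v) (at v)"
    and dom: "\<And>v h. v \<in> ball v0 e \<Longrightarrow> \<bar>F' v h\<bar> \<le> c * norm h"
    and h: "norm h < e"
  shows "\<bar>F (v0 + h) - F v0 - F' v0 h\<bar> \<le> 2 * c * norm h"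
proof -
  have v0: "v0 \<in> ball v0 e" using h le_less_trans[OF norm_ge_zero h] by simp
  have "norm (F (v0 + h) - F v0 - F' v0 ((v0 + h) - v0)) \<le> norm ((v0 + h) - v0) * (2 * c)"
  proof (rule differentiable_bound_linearization[where S="ball v0 e" and f'=F'])
    show "v0 + t *\<^sub>R (v0 + h - v0) \<in> ball v0 e" if "t \<in> {0..1}" for t
      using h that by (auto simp: dist_norm) (smt (verit) mult_left_le_one_le norm_ge_zero)
    show "(F has_derivative F' y) (at y within ball v0 e)" if "y \<in> ball v0 e" for y
      using der[OF that] has_derivative_at_withinI by blast
    show "onorm (F' y - F' v0) \<le> 2 * c" if "y \<in> ball v0 e" for y
    proof (rule onorm_le)
      fix h
      have "\<bar>F' y h\<bar> \<le> c * norm h" "\<bar>F' v0 h\<bar> \<le> c * norm h"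
        using dom[OF that] dom[OF v0] by auto
      then show "norm ((F' y - F' v0) h) \<le> 2 * c * norm h" by simp
    qed
  qed (use v0 in auto)
  then show ?thesis by (simp add: mult.commute)
qed

lemma tendsto_integral_linearization_error:
  fixes F :: "'a::{real_normed_vector, perfect_space} \<Rightarrow> 'b \<Rightarrow> real"
  assumes der: "\<And>v x. x \<in> space M \<Longrightarrow> ((\<lambda>v. F v x) has_derivative F' v x) (at v)"
    and meas': "\<And>v h. (\<lambda>x. F' v x h) \<in> borel_measurable M"
    and int: "\<And>v. integrable M (F v)"
    and e: "e > 0" and g: "integrable M g"
    and dom: "\<And>v x h. v \<in> ball u e \<Longrightarrow> x \<in> space M \<Longrightarrow> \<bar>F' v x h\<bar> \<le> g x * norm h"
  shows "((\<lambda>h. \<integral>x. (F (u + h) x - F u x - F' u x h) / norm h \<partial>M) \<longlongrightarrow> 0) (at 0)"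
proof -
  have "((\<lambda>h. \<integral>x. (F (u + h) x - F u x - F' u x h) / norm h \<partial>M) \<longlongrightarrow> (\<integral>x. 0 \<partial>M)) (at 0)"
  proof (rule tendsto_integral_at_dominated[where w="\<lambda>x. 2 * g x"])
    show "(\<lambda>x. (F (u + h) x - F u x - F' u x h) / norm h) \<in> borel_measurable M" for h
      using int[of "u + h"] int[of u] meas'[of u h] by auto
    show "((\<lambda>h. (F (u + h) x - F u x - F' u x h) / norm h) \<longlongrightarrow> 0) (at 0)" if "x \<in> space M" for x
      using der[OF that, of u] tendsto_norm_zero_iff unfolding has_derivative_at by fastforce
    have "\<forall>\<^sub>F h in at (0::'a). h \<in> ball 0 e"
      using e by (intro eventually_at_in_open') auto
    moreover have "\<forall>\<^sub>F h in at (0::'a). h \<noteq> 0"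
      by (simp add: eventually_at_filter)
    ultimately show "\<forall>\<^sub>F h in at 0. \<forall>x\<in>space M. \<bar>(F (u + h) x - F u x - F' u x h) / norm h\<bar> \<le> 2 * g x"
    proof eventually_elim
      case (elim h)
      show ?case
      proof
        fix x assume x: "x \<in> space M"
        have "\<bar>F (u + h) x - F u x - F' u x h\<bar> \<le> 2 * g x * norm h"
          using elim by (intro abs_linearization_error_le[where F="\<lambda>v. F v x" and F'="\<lambda>v. F' v x",
              OF der[OF x] dom[OF _ x]]) auto
        then show "\<bar>(F (u + h) x - F u x - F' u x h) / norm h\<bar> \<le> 2 * g x"
          using elim by (simp add: abs_divide divide_le_eq)
      qed
    qed
  qed (use g in simp_all)
  then show ?thesis by simp
qed

lemma has_derivative_integral:
  fixes F :: "'a::{real_normed_vector, perfect_space} \<Rightarrow> 'b \<Rightarrow> real"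
  assumes der: "\<And>v x. x \<in> space M \<Longrightarrow> ((\<lambda>v. F v x) has_derivative F' v x) (at v)"
    and meas': "\<And>v h. (\<lambda>x. F' v x h) \<in> borel_measurable M"
    and int: "\<And>v. integrable M (F v)"
    and e: "e > 0" and g: "integrable M g"
    and dom: "\<And>v x h. v \<in> ball v0 e \<Longrightarrow> x \<in> space M \<Longrightarrow> \<bar>F' v x h\<bar> \<le> g x * norm h"
  shows "((\<lambda>v. \<integral>x. F v x \<partial>M) has_derivative (\<lambda>h. \<integral>x. F' v0 x h \<partial>M)) (at v0)"
proof -
  have v0: "v0 \<in> ball v0 e" using e by simp
  have eq: "(\<integral>x. (F (v0 + h) x - F v0 x - F' v0 x h) / norm h \<partial>M)
      = ((\<integral>x. F (v0 + h) x \<partial>M) - (\<integral>x. F v0 x \<partial>M) - (\<integral>x. F' v0 x h \<partial>M)) / norm h" for h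
    using int[of "v0 + h"] int[of v0] integrable_dominated_linear[where T="F' v0", OF meas' g dom[OF v0]]
    by simp
  have "((\<lambda>h. ((\<integral>x. F (v0 + h) x \<partial>M) - (\<integral>x. F v0 x \<partial>M)
      - (\<integral>x. F' v0 x h \<partial>M)) / norm h) \<longlongrightarrow> 0) (at 0)"
    using tendsto_integral_linearization_error[where u=v0, OF der meas' int e g dom] unfolding eq .
  then have "((\<lambda>h. norm ((\<integral>x. F (v0 + h) x \<partial>M) - (\<integral>x. F v0 x \<partial>M)
      - (\<integral>x. F' v0 x h \<partial>M)) / norm h) \<longlongrightarrow> 0) (at 0)"
    using tendsto_rabs_zero by (force simp: abs_divide)
  moreover have "linear (F' v0 x)" if "x \<in> space M" for x
    using der[OF that] by (auto dest: has_derivative_bounded_linear bounded_linear.linear)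
  then have "bounded_linear (\<lambda>h. \<integral>x. F' v0 x h \<partial>M)"
    using meas' g dom[OF v0] by (rule bounded_linear_integral_dominated)
  ultimately show ?thesis unfolding has_derivative_at by blast
qed

lemma integral_continuously_differentiable:
  fixes F :: "'a::euclidean_space \<Rightarrow> 'b \<Rightarrow> real" and F' :: "'a \<Rightarrow> 'b \<Rightarrow> 'a \<Rightarrow> real"
  assumes der: "\<And>v x. x \<in> space M \<Longrightarrow> ((\<lambda>v. F v x) has_derivative F' v x) (at v)"
    and meas': "\<And>v h. (\<lambda>x. F' v x h) \<in> borel_measurable M"
    and int: "\<And>v. integrable M (F v)"
    and cont: "\<And>x h. x \<in> space M \<Longrightarrow> continuous_on UNIV (\<lambda>v. F' v x h)"
    and dom: "\<And>v0. \<exists>e>0. \<exists>g. integrable M g \<and>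
               (\<forall>v\<in>ball v0 e. \<forall>x\<in>space M. \<forall>h. \<bar>F' v x h\<bar> \<le> g x * norm h)"
  obtains D :: "'a \<Rightarrow> 'a \<Rightarrow>\<^sub>L real"
  where "\<And>v. ((\<lambda>v. \<integral>x. F v x \<partial>M) has_derivative blinfun_apply (D v)) (at v)"
    and "continuous_on UNIV D" and "\<And>v h. D v h = (\<integral>x. F' v x h \<partial>M)"
proof -
  have d: "((\<lambda>v. \<integral>x. F v x \<partial>M) has_derivative (\<lambda>h. \<integral>x. F' v0 x h \<partial>M)) (at v0)" for v0
    using dom[of v0] has_derivative_integral[OF der meas' int] by blast
  define D where "D v = Blinfun (\<lambda>h. \<integral>x. F' v x h \<partial>M)" for v
  have D: "blinfun_apply (D v) = (\<lambda>h. \<integral>x. F' v x h \<partial>M)" for v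
    unfolding D_def using d[of v] by (auto intro!: bounded_linear_Blinfun_apply has_derivative_bounded_linear)
  have "continuous_on UNIV D"
  proof (rule continuous_on_blinfun_componentwise, intro continuous_at_imp_continuous_on ballI)
    fix h v0 :: 'a
    obtain e g where e: "e > 0" and g: "integrable M g"
      and dom_e: "\<And>v x. v \<in> ball v0 e \<Longrightarrow> x \<in> space M \<Longrightarrow> \<bar>F' v x h\<bar> \<le> g x * norm h"
      using dom[of v0] by blast
    have "\<forall>\<^sub>F v in at v0. v \<in> ball v0 e"
      using e by (intro eventually_at_in_open') auto
    then have "((\<lambda>v. \<integral>x. F' v x h \<partial>M) \<longlongrightarrow> (\<integral>x. F' v0 x h \<partial>M)) (at v0)"
      using cont g meas' dom_e
      by (intro tendsto_integral_at_dominated[where w="\<lambda>x. g x * norm h"])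
         (auto simp: continuous_on_eq_continuous_at continuous_at elim!: eventually_mono)
    then show "continuous (at v0) (\<lambda>v. blinfun_apply (D v) h)"
      unfolding D continuous_at .
  qed
  then show ?thesis using d by (intro that[of D]) (simp_all add: D)
qed

section \<open>Forward-mode derivative of the network\<close>

fun dnet :: "(nat \<Rightarrow> nat) \<Rightarrow> (nat \<Rightarrow> real) \<Rightarrow> (nat \<Rightarrow> real \<Rightarrow> real) \<Rightarrow> (nat \<Rightarrow> real \<Rightarrow> real)
    \<Rightarrow> nat \<Rightarrow> (nat \<Rightarrow> real) \<Rightarrow> nat \<Rightarrow> (nat \<Rightarrow> real) \<Rightarrow> real" where
  "dnet l \<theta> act act' 0 x i h = 0"
| "dnet l \<theta> act act' (Suc 0) x i h = bias l h 1 i + (\<Sum>j = 1..l 0. wgt l h 1 i j * x j)"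
| "dnet l \<theta> act act' (Suc (Suc k)) x i h =
     bias l h (Suc (Suc k)) i
     + (\<Sum>j = 1..l (Suc k). wgt l h (Suc (Suc k)) i j * act (Suc k) (net l \<theta> act (Suc k) x j)
          + wgt l \<theta> (Suc (Suc k)) i j * act' (Suc k) (net l \<theta> act (Suc k) x j)
            * dnet l \<theta> act act' (Suc k) x j h)"

lemmas layer_induct = induct_nat_012[case_names 0 1 Suc_Suc]

lemma has_derivative_coords: "((\<lambda>v. coords idx v p) has_derivative (\<lambda>h. coords idx h p)) (at v)"
  unfolding coords_def by (rule bounded_linear_imp_has_derivative) auto

lemma has_derivative_bias:
  "((\<lambda>v. bias l (coords idx v) k i) has_derivative (\<lambda>h. bias l (coords idx h) k i)) (at v)"
  unfolding bias_def by (rule has_derivative_coords)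

lemma has_derivative_wgt:
  "((\<lambda>v. wgt l (coords idx v) k i j) has_derivative (\<lambda>h. wgt l (coords idx h) k i j)) (at v)"
  unfolding wgt_def by (rule has_derivative_coords)

lemma has_derivative_net:
  assumes act: "\<And>k y. (act k has_real_derivative act' k y) (at y)"
  shows "((\<lambda>v. net l (coords idx v) act k x i) has_derivative
           (\<lambda>h. dnet l (coords idx v) act act' k x i (coords idx h))) (at v)"
proof (induction k arbitrary: i rule: layer_induct)
  case (Suc_Suc k)
  have "((\<lambda>v. act (Suc k) (net l (coords idx v) act (Suc k) x j)) has_derivative
      (\<lambda>h. act' (Suc k) (net l (coords idx v) act (Suc k) x j)
             * dnet l (coords idx v) act act' (Suc k) x j (coords idx h))) (at v)" for j
    using diff_chain_at[OF Suc_Suc.IH(2) has_field_derivative_imp_has_derivative[OF act]]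
    by (simp add: comp_def)
  then show ?case
    by (auto intro!: derivative_eq_intros has_derivative_bias has_derivative_wgt simp: algebra_simps)
qed (auto intro!: derivative_eq_intros has_derivative_bias has_derivative_wgt)

fun net_bound :: "(nat \<Rightarrow> nat) \<Rightarrow> real \<Rightarrow> real \<Rightarrow> nat \<Rightarrow> real" where
  "net_bound l M c 0 = 0"
| "net_bound l M c (Suc 0) = M + real (l 0) * (M * c)"
| "net_bound l M c (Suc (Suc k)) = M + real (l (Suc k)) * (M * net_bound l M c (Suc k))"

fun dnet_bound :: "(nat \<Rightarrow> nat) \<Rightarrow> real \<Rightarrow> real \<Rightarrow> real \<Rightarrow> nat \<Rightarrow> real" where
  "dnet_bound l M c C 0 = 0"
| "dnet_bound l M c C (Suc 0) = 1 + real (l 0) * c"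
| "dnet_bound l M c C (Suc (Suc k)) =
     1 + real (l (Suc k)) * (net_bound l M c (Suc k) + M * (C * dnet_bound l M c C (Suc k)))"

lemma abs_sum_mult_le:
  fixes w z :: "nat \<Rightarrow> real"
  assumes "\<And>j. j \<in> S \<Longrightarrow> \<bar>w j\<bar> \<le> M" "\<And>j. j \<in> S \<Longrightarrow> \<bar>z j\<bar> \<le> K" "0 \<le> M"
  shows "\<bar>\<Sum>j\<in>S. w j * z j\<bar> \<le> real (card S) * (M * K)"
proof -
  have "\<bar>\<Sum>j\<in>S. w j * z j\<bar> \<le> (\<Sum>j\<in>S. \<bar>w j\<bar> * \<bar>z j\<bar>)"
    unfolding abs_mult[symmetric] by (rule sum_abs)
  also have "\<dots> \<le> (\<Sum>j\<in>S. M * K)"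
    using assms by (intro sum_mono mult_mono) auto
  finally show ?thesis by simp
qed

lemma abs_net_le:
  assumes act: "\<And>k y. \<bar>act k y\<bar> \<le> \<bar>y\<bar>" and \<theta>: "\<And>p. \<bar>\<theta> p\<bar> \<le> M"
    and x: "\<And>j. j \<in> {1..l 0} \<Longrightarrow> \<bar>x j\<bar> \<le> c"
  shows "\<bar>net l \<theta> act k x i\<bar> \<le> net_bound l M c k"
proof (induction k arbitrary: i rule: layer_induct)
  case 1
  have "0 \<le> M" using \<theta>[of 0] abs_ge_zero[of "\<theta> 0"] by linarith
  then have "\<bar>\<Sum>j = 1..l 0. wgt l \<theta> 1 i j * x j\<bar> \<le> real (l 0) * (M * c)"
    using abs_sum_mult_le[of "{1..l 0}" "wgt l \<theta> 1 i" M x c] \<theta> x by (simp add: wgt_def)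
  moreover have "\<bar>bias l \<theta> 1 i\<bar> \<le> M" using \<theta> by (simp add: bias_def)
  ultimately show ?case
    using abs_triangle_ineq[of "bias l \<theta> 1 i" "\<Sum>j = 1..l 0. wgt l \<theta> 1 i j * x j"] by simp
next
  case (Suc_Suc k)
  let ?a = "\<lambda>j. act (Suc k) (net l \<theta> act (Suc k) x j)"
  have "0 \<le> M" using \<theta>[of 0] abs_ge_zero[of "\<theta> 0"] by linarith
  moreover have "\<bar>?a j\<bar> \<le> net_bound l M c (Suc k)" for j
    using act[of "Suc k" "net l \<theta> act (Suc k) x j"] Suc_Suc.IH(2)[of j] by linarith
  ultimately have "\<bar>\<Sum>j = 1..l (Suc k). wgt l \<theta> (Suc (Suc k)) i j * ?a j\<bar>
      \<le> real (l (Suc k)) * (M * net_bound l M c (Suc k))"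
    using abs_sum_mult_le[of "{1..l (Suc k)}" "wgt l \<theta> (Suc (Suc k)) i" M ?a] \<theta> by (simp add: wgt_def)
  moreover have "\<bar>bias l \<theta> (Suc (Suc k)) i\<bar> \<le> M" using \<theta> by (simp add: bias_def)
  ultimately show ?case
    using abs_triangle_ineq[of "bias l \<theta> (Suc (Suc k)) i"
        "\<Sum>j = 1..l (Suc k). wgt l \<theta> (Suc (Suc k)) i j * ?a j"] by simp
qed simp

lemma abs_dnet_le:
  assumes act: "\<And>k y. \<bar>act k y\<bar> \<le> \<bar>y\<bar>" and act': "\<And>k y. \<bar>act' k y\<bar> \<le> C"
    and \<theta>: "\<And>p. \<bar>\<theta> p\<bar> \<le> M" and x: "\<And>j. j \<in> {1..l 0} \<Longrightarrow> \<bar>x j\<bar> \<le> c"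
    and h: "\<And>p. \<bar>h p\<bar> \<le> H"
  shows "\<bar>dnet l \<theta> act act' k x i h\<bar> \<le> dnet_bound l M c C k * H"
proof (induction k arbitrary: i rule: layer_induct)
  case 1
  have "0 \<le> H" using h[of 0] abs_ge_zero[of "h 0"] by linarith
  then have "\<bar>\<Sum>j = 1..l 0. wgt l h 1 i j * x j\<bar> \<le> real (l 0) * (H * c)"
    using abs_sum_mult_le[of "{1..l 0}" "wgt l h 1 i" H x c] h x by (simp add: wgt_def)
  moreover have "\<bar>bias l h 1 i\<bar> \<le> H" using h by (simp add: bias_def)
  ultimately show ?case
    using abs_triangle_ineq[of "bias l h 1 i" "\<Sum>j = 1..l 0. wgt l h 1 i j * x j"]
    by (simp add: algebra_simps)
next
  case (Suc_Suc k)
  let ?n = "real (l (Suc k))" and ?N = "net_bound l M c (Suc k)" and ?D = "dnet_bound l M c C (Suc k)"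
  let ?a = "\<lambda>j. act (Suc k) (net l \<theta> act (Suc k) x j)"
    and ?d = "\<lambda>j. act' (Suc k) (net l \<theta> act (Suc k) x j) * dnet l \<theta> act act' (Suc k) x j h"
  have H: "0 \<le> H" using h[of 0] abs_ge_zero[of "h 0"] by linarith
  have M: "0 \<le> M" using \<theta>[of 0] abs_ge_zero[of "\<theta> 0"] by linarith
  have C: "0 \<le> C" using act'[of 0 0] abs_ge_zero[of "act' 0 0"] by linarith
  have "\<bar>net l \<theta> act (Suc k) x j\<bar> \<le> ?N" for j
    using act \<theta> x by (rule abs_net_le)
  then have "\<bar>?a j\<bar> \<le> ?N" for j
    using act[of "Suc k" "net l \<theta> act (Suc k) x j"] order_trans by blast
  then have s1: "\<bar>\<Sum>j = 1..l (Suc k). wgt l h (Suc (Suc k)) i j * ?a j\<bar> \<le> ?n * (H * ?N)"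
    using abs_sum_mult_le[of "{1..l (Suc k)}" "wgt l h (Suc (Suc k)) i" H ?a] h H by (simp add: wgt_def)
  have "\<bar>?d j\<bar> \<le> C * (?D * H)" for j
    unfolding abs_mult using act' Suc_Suc.IH(2) C by (intro mult_mono) auto
  then have s2: "\<bar>\<Sum>j = 1..l (Suc k). wgt l \<theta> (Suc (Suc k)) i j * ?d j\<bar> \<le> ?n * (M * (C * (?D * H)))"
    using abs_sum_mult_le[of "{1..l (Suc k)}" "wgt l \<theta> (Suc (Suc k)) i" M ?d] \<theta> M by (simp add: wgt_def)
  have b: "\<bar>bias l h (Suc (Suc k)) i\<bar> \<le> H" using h by (simp add: bias_def)
  let ?s1 = "\<Sum>j = 1..l (Suc k). wgt l h (Suc (Suc k)) i j * ?a j"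
    and ?s2 = "\<Sum>j = 1..l (Suc k). wgt l \<theta> (Suc (Suc k)) i j * ?d j"
  have "dnet l \<theta> act act' (Suc (Suc k)) x i h = bias l h (Suc (Suc k)) i + ?s1 + ?s2"
    by (simp add: sum.distrib mult.assoc)
  moreover have "\<bar>bias l h (Suc (Suc k)) i + ?s1 + ?s2\<bar> \<le> H + ?n * (H * ?N) + ?n * (M * (C * (?D * H)))"
    using s1 s2 b abs_triangle_ineq[of "bias l h (Suc (Suc k)) i + ?s1" ?s2]
      abs_triangle_ineq[of "bias l h (Suc (Suc k)) i" ?s1] by argo
  moreover have "H + ?n * (H * ?N) + ?n * (M * (C * (?D * H))) = dnet_bound l M c C (Suc (Suc k)) * H"
    by (simp add: algebra_simps)
  ultimately show ?case by argo
qed simp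

lemma borel_measurable_net:
  assumes x: "\<And>j. (\<lambda>x. x j) \<in> borel_measurable M" and act: "\<And>k. act k \<in> borel_measurable borel"
  shows "(\<lambda>x. net l \<theta> act k x i) \<in> borel_measurable M"
proof (induction k arbitrary: i rule: layer_induct)
  case (Suc_Suc k)
  have "(\<lambda>x. act (Suc k) (net l \<theta> act (Suc k) x j)) \<in> borel_measurable M" for j
    using measurable_compose[OF Suc_Suc.IH(2) act] by simp
  then show ?case by simp
qed (use x in simp_all)

lemma borel_measurable_dnet:
  assumes x: "\<And>j. (\<lambda>x. x j) \<in> borel_measurable M" and act: "\<And>k. act k \<in> borel_measurable borel"
    and act': "\<And>k. act' k \<in> borel_measurable borel"
  shows "(\<lambda>x. dnet l \<theta> act act' k x i h) \<in> borel_measurable M"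
proof (induction k arbitrary: i rule: layer_induct)
  case (Suc_Suc k)
  have "(\<lambda>x. act (Suc k) (net l \<theta> act (Suc k) x j)) \<in> borel_measurable M"
    and "(\<lambda>x. act' (Suc k) (net l \<theta> act (Suc k) x j)) \<in> borel_measurable M" for j
    using measurable_compose[OF borel_measurable_net[OF x act] act]
      measurable_compose[OF borel_measurable_net[OF x act] act'] by simp_all
  then show ?case using Suc_Suc.IH(2) by simp
qed (use x in simp_all)

lemma continuous_on_coords: "continuous_on UNIV (\<lambda>v. coords idx v p)"
  unfolding coords_def by (intro continuous_on_component continuous_on_id)

lemma continuous_on_bias: "continuous_on UNIV (\<lambda>v. bias l (coords idx v) k i)"
  unfolding bias_def by (rule continuous_on_coords)

lemma continuous_on_wgt: "continuous_on UNIV (\<lambda>v. wgt l (coords idx v) k i j)"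
  unfolding wgt_def by (rule continuous_on_coords)

lemma continuous_on_net:
  assumes act: "\<And>k. continuous_on UNIV (act k)"
  shows "continuous_on UNIV (\<lambda>v. net l (coords idx v) act k x i)"
proof (induction k arbitrary: i rule: layer_induct)
  case (Suc_Suc k)
  have "continuous_on UNIV (\<lambda>v. act (Suc k) (net l (coords idx v) act (Suc k) x j))" for j
    using continuous_on_compose2[OF act Suc_Suc.IH(2)] by simp
  then show ?case by (auto intro!: continuous_intros continuous_on_bias continuous_on_wgt)
qed (auto intro!: continuous_intros continuous_on_bias continuous_on_wgt)

lemma continuous_on_dnet:
  assumes act: "\<And>k. continuous_on UNIV (act k)" and act': "\<And>k. continuous_on UNIV (act' k)"
  shows "continuous_on UNIV (\<lambda>v. dnet l (coords idx v) act act' k x i h)"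
proof (induction k arbitrary: i rule: layer_induct)
  case (Suc_Suc k)
  have "continuous_on UNIV (\<lambda>v. act (Suc k) (net l (coords idx v) act (Suc k) x j))" for j
    using continuous_on_compose2[OF act continuous_on_net[OF act]] by simp
  moreover have "continuous_on UNIV (\<lambda>v. act' (Suc k) (net l (coords idx v) act (Suc k) x j))" for j
    using continuous_on_compose2[OF act' continuous_on_net[OF act]] by simp
  ultimately show ?case using Suc_Suc.IH(2) by (auto intro!: continuous_intros continuous_on_wgt)
qed simp_all

section \<open>Path sums and coordinate directions\<close>

lemma sum_PiE_insert:
  assumes "x \<notin> S"
  shows "(\<Sum>v\<in>PiE (insert x S) T. G v) = (\<Sum>y\<in>T x. \<Sum>v\<in>PiE S T. G (v(x := y)))"
proof -
  have "(\<Sum>v\<in>PiE (insert x S) T. G v) = (\<Sum>p\<in>T x \<times> PiE S T. G ((\<lambda>(y, g). g(x := y)) p))"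
    unfolding PiE_insert_eq by (rule sum.reindex[OF inj_combinator[OF assms], unfolded comp_def])
  also have "\<dots> = (\<Sum>y\<in>T x. \<Sum>v\<in>PiE S T. G (v(x := y)))"
    by (simp add: sum.cartesian_product split_def)
  finally show ?thesis .
qed

text \<open>\<open>C n a b\<close> is the gain of the edge from neuron \<open>b\<close> of layer \<open>n - 1\<close> to neuron \<open>a\<close>
  of layer \<open>n\<close>.\<close>

definition path_sum :: "(nat \<Rightarrow> nat) \<Rightarrow> (nat \<Rightarrow> nat \<Rightarrow> nat \<Rightarrow> real) \<Rightarrow> nat \<Rightarrow> nat \<Rightarrow> nat \<Rightarrow> nat \<Rightarrow> real"
  where "path_sum l C k i m u = (\<Sum>v\<in>PiE {k..m} (\<lambda>w. {1..l w}).
      if v m = u \<and> v k = i then (\<Prod>n\<in>{k+1..m}. C n (v n) (v (n - 1))) else 0)"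

lemma path_sum_same_layer:
  assumes "u \<in> {1..l k}" "i \<in> {1..l k}"
  shows "path_sum l C k i k u = (if u = i then 1 else 0)"
proof -
  have "path_sum l C k i k u
      = (\<Sum>v\<in>PiE (insert k {}) (\<lambda>w. {1..l w}). if v k = u \<and> v k = i then 1 else 0)"
    unfolding path_sum_def by (simp cong: if_cong)
  also have "\<dots> = (\<Sum>y\<in>{1..l k}. if y = u \<and> y = i then 1 else 0)"
    by (subst sum_PiE_insert) (simp_all add: PiE_empty_domain)
  also have "\<dots> = (if u = i then 1 else 0)"
    using assms by (cases "u = i") (simp_all add: sum.delta cong: conj_cong)
  finally show ?thesis .
qed

lemma path_sum_Suc:
  assumes km: "k \<le> m" and u: "u \<in> {1..l (Suc m)}"
  shows "path_sum l C k i (Suc m) u = (\<Sum>j\<in>{1..l m}. C (Suc m) u j * path_sum l C k i m j)"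
proof -
  let ?P = "\<lambda>v. \<Prod>n\<in>{k+1..m}. C n (v n) (v (n - 1))"
  have prod_upd: "(\<Prod>n\<in>{k+1..Suc m}. C n ((v(Suc m := y)) n) ((v(Suc m := y)) (n - 1)))
      = C (Suc m) y (v m) * ?P v" for v y
  proof -
    have "{k+1..Suc m} = insert (Suc m) {k+1..m}" using km by auto
    moreover have "(\<Prod>n\<in>{k+1..m}. C n ((v(Suc m := y)) n) ((v(Suc m := y)) (n - 1))) = ?P v"
      by (rule prod.cong) auto
    ultimately show ?thesis by simp
  qed
  have "path_sum l C k i (Suc m) u = (\<Sum>y\<in>{1..l (Suc m)}. \<Sum>v\<in>PiE {k..m} (\<lambda>w. {1..l w}).
      if y = u \<and> v k = i then C (Suc m) y (v m) * ?P v else 0)"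
    unfolding path_sum_def atLeastAtMostSuc_conv[OF le_SucI[OF km]]
  proof (subst sum_PiE_insert, simp, intro sum.cong refl)
    fix y v
    show "(if (v(Suc m := y)) (Suc m) = u \<and> (v(Suc m := y)) k = i
            then \<Prod>n\<in>{k+1..Suc m}. C n ((v(Suc m := y)) n) ((v(Suc m := y)) (n - 1)) else 0)
        = (if y = u \<and> v k = i then C (Suc m) y (v m) * ?P v else 0)"
      by (subst prod_upd) (use km in auto)
  qed
  also have "\<dots> = (\<Sum>v\<in>PiE {k..m} (\<lambda>w. {1..l w}). if v k = i then C (Suc m) u (v m) * ?P v else 0)"
    using u by (subst sum.swap) (auto simp: sum.delta' intro!: sum.cong)
  also have "\<dots> = (\<Sum>v\<in>PiE {k..m} (\<lambda>w. {1..l w}). \<Sum>j\<in>{1..l m}.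
      C (Suc m) u j * (if v m = j \<and> v k = i then ?P v else 0))"
  proof (rule sum.cong[OF refl])
    fix v assume "v \<in> PiE {k..m} (\<lambda>w. {1..l w})"
    then have "v m \<in> {1..l m}" using km by (auto simp: PiE_def Pi_def)
    then show "(if v k = i then C (Suc m) u (v m) * ?P v else 0)
      = (\<Sum>j\<in>{1..l m}. C (Suc m) u j * (if v m = j \<and> v k = i then ?P v else 0))"
      by (auto simp: if_distrib sum.delta cong: if_cong)
  qed
  also have "\<dots> = (\<Sum>j\<in>{1..l m}. C (Suc m) u j * path_sum l C k i m j)"
    unfolding path_sum_def sum_distrib_left by (rule sum.swap)
  finally show ?thesis .
qed

lemma sum_path_sum:
  assumes "k \<le> L"
  shows "(\<Sum>u\<in>{1..l L}. D u * path_sum l C k i L u) =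
    (\<Sum>v\<in>PiE {k..L} (\<lambda>w. {1..l w}). (indicator {i} (v k) :: real) * D (v L)
        * (\<Prod>n\<in>{k+1..L}. C n (v n) (v (n - 1))))"
proof -
  have "(\<Sum>u\<in>{1..l L}. D u * path_sum l C k i L u) =
     (\<Sum>v\<in>PiE {k..L} (\<lambda>w. {1..l w}). \<Sum>u\<in>{1..l L}.
        if v L = u \<and> v k = i then D u * (\<Prod>n\<in>{k+1..L}. C n (v n) (v (n - 1))) else 0)"
    unfolding path_sum_def sum_distrib_left by (subst sum.swap) (simp add: if_distrib cong: if_cong)
  also have "\<dots> = (\<Sum>v\<in>PiE {k..L} (\<lambda>w. {1..l w}). (indicator {i} (v k) :: real) * D (v L)
        * (\<Prod>n\<in>{k+1..L}. C n (v n) (v (n - 1))))"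
  proof (rule sum.cong[OF refl])
    fix v assume "v \<in> PiE {k..L} (\<lambda>w. {1..l w})"
    then have "v L \<in> {1..l L}" using assms by (auto simp: PiE_def Pi_def)
    then show "(\<Sum>u\<in>{1..l L}. if v L = u \<and> v k = i then D u * (\<Prod>n\<in>{k+1..L}. C n (v n) (v (n - 1))) else 0)
      = (indicator {i} (v k) :: real) * D (v L) * (\<Prod>n\<in>{k+1..L}. C n (v n) (v (n - 1)))"
      by (cases "v k = i") (simp_all add: sum.delta cong: conj_cong)
  qed
  finally show ?thesis .
qed

lemma dsum_mono: "m \<le> n \<Longrightarrow> dsum l m \<le> dsum l n"
  unfolding dsum_def by (rule sum_mono2) auto

lemma dsum_pred: "1 \<le> k \<Longrightarrow> dsum l k = dsum l (k - 1) + l k * (l (k - 1) + 1)"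
  by (cases k) (auto simp: dsum_def)

lemma weight_index_bounds:
  assumes "1 \<le> k" "i \<in> {1..l k}" "j \<in> {1..l (k - 1)}"
  shows "dsum l (k - 1) < (i - 1) * l (k - 1) + j + dsum l (k - 1)"
    and "(i - 1) * l (k - 1) + j + dsum l (k - 1) \<le> dsum l (k - 1) + l k * l (k - 1)"
proof -
  show "dsum l (k - 1) < (i - 1) * l (k - 1) + j + dsum l (k - 1)" using assms by auto
  have "(i - 1) * l (k - 1) + j \<le> (i - 1) * l (k - 1) + l (k - 1)" using assms by auto
  also have "\<dots> = i * l (k - 1)" using assms by (cases i) auto
  also have "\<dots> \<le> l k * l (k - 1)" using assms by auto
  finally show "(i - 1) * l (k - 1) + j + dsum l (k - 1) \<le> dsum l (k - 1) + l k * l (k - 1)" by simp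
qed

lemma bias_index_bounds:
  assumes "1 \<le> k" "i \<in> {1..l k}"
  shows "dsum l (k - 1) + l k * l (k - 1) < l k * l (k - 1) + i + dsum l (k - 1)"
    and "l k * l (k - 1) + i + dsum l (k - 1) \<le> dsum l k"
  using assms by (auto simp: dsum_pred[of k l] algebra_simps)

lemma weight_index_block:
  assumes "1 \<le> k" "i \<in> {1..l k}" "j \<in> {1..l (k - 1)}"
  shows "dsum l (k - 1) < (i - 1) * l (k - 1) + j + dsum l (k - 1)"
    and "(i - 1) * l (k - 1) + j + dsum l (k - 1) \<le> dsum l k"
  using weight_index_bounds[OF assms] dsum_pred[OF assms(1), of l] by auto

lemma mult_add_eq_imp_eq:
  fixes a a' j j' c :: nat
  assumes "j \<in> {1..c}" "j' \<in> {1..c}" "a * c + j = a' * c + j'"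
  shows "a = a' \<and> j = j'"
proof -
  have div: "d < c \<Longrightarrow> (b * c + d) div c = b" for b d :: nat by simp
  have "(a * c + (j - 1)) div c = a" "(a' * c + (j' - 1)) div c = a'"
    using assms(1,2) by (intro div; auto)+
  moreover have "a * c + (j - 1) = a' * c + (j' - 1)" using assms by simp
  ultimately show ?thesis using assms by (metis add_left_cancel)
qed

lemma param_blocks_disjoint:
  assumes "1 \<le> m" "1 \<le> k" "m \<noteq> k" "dsum l (m - 1) < p" "p \<le> dsum l m"
    "dsum l (k - 1) < q" "q \<le> dsum l k"
  shows "p \<noteq> q"
proof (cases "m < k")
  case True
  then have "dsum l m \<le> dsum l (k - 1)" by (intro dsum_mono) auto
  then show ?thesis using assms by auto
next
  case False
  then have "dsum l k \<le> dsum l (m - 1)" using assms by (intro dsum_mono) auto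
  then show ?thesis using assms by auto
qed

locale unit_direction =
  fixes l :: "nat \<Rightarrow> nat" and L k p :: nat and h :: "nat \<Rightarrow> real"
  assumes unit: "\<forall>q\<in>{1..dsum l L}. h q = (if q = p then 1 else 0)"
    and k: "k \<in> {1..L}"
    and p: "dsum l (k - 1) < p" "p \<le> dsum l k"
begin

lemma unit_in_block:
  assumes "m \<in> {1..L}" "dsum l (m - 1) < q" "q \<le> dsum l m"
  shows "h q = (if q = p then 1 else 0)"
  using unit assms dsum_mono[of m L l] by auto

lemma wgt_other_layer:
  assumes "m \<in> {1..L}" "m \<noteq> k" "u \<in> {1..l m}" "j \<in> {1..l (m - 1)}"
  shows "wgt l h m u j = 0"
proof -
  let ?q = "(u - 1) * l (m - 1) + j + dsum l (m - 1)"
  have q: "dsum l (m - 1) < ?q" "?q \<le> dsum l m"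
    using weight_index_block[of m u l j] assms by auto
  have "?q \<noteq> p" using param_blocks_disjoint[OF _ _ assms(2) q p] assms k by auto
  then show ?thesis using unit_in_block[OF assms(1) q] unfolding wgt_def by simp
qed

lemma bias_other_layer:
  assumes "m \<in> {1..L}" "m \<noteq> k" "u \<in> {1..l m}"
  shows "bias l h m u = 0"
proof -
  let ?q = "l m * l (m - 1) + u + dsum l (m - 1)"
  have q: "dsum l (m - 1) < ?q" "?q \<le> dsum l m"
    using bias_index_bounds[of m u l] assms by auto
  have "?q \<noteq> p" using param_blocks_disjoint[OF _ _ assms(2) q p] assms k by auto
  then show ?thesis using unit_in_block[OF assms(1) q] unfolding bias_def by simp
qed

lemma dnet_below_layer:
  "m < k \<Longrightarrow> u \<in> {1..l m} \<Longrightarrow> dnet l \<theta> act act' m x u h = 0"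
proof (induction m arbitrary: u rule: layer_induct)
  case 1
  then show ?case using k wgt_other_layer[of 1 u] bias_other_layer[of 1 u] by auto
next
  case (Suc_Suc m)
  then show ?case using k wgt_other_layer[of "Suc (Suc m)" u] bias_other_layer[of "Suc (Suc m)" u]
    by (auto intro!: sum.neutral)
qed simp

text \<open>Above layer \<open>k\<close> the direction has no components, so the derivative is propagated
  linearly, with the local gains \<open>wgt * act'\<close> as edge weights.\<close>

lemma dnet_path_sum:
  assumes i: "i \<in> {1..l k}"
    and seed: "\<And>u. u \<in> {1..l k} \<Longrightarrow> dnet l \<theta> act act' k x u h = (if u = i then c else 0)"
  shows "m \<in> {k..L} \<Longrightarrow> u \<in> {1..l m} \<Longrightarrow> dnet l \<theta> act act' m x u h
    = c * path_sum l (\<lambda>n a b. wgt l \<theta> n a b * act' (n - 1) (net l \<theta> act (n - 1) x b)) k i m u"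
proof (induction m arbitrary: u)
  case 0
  then show ?case using k by auto
next
  case (Suc m)
  let ?C = "\<lambda>n a b. wgt l \<theta> n a b * act' (n - 1) (net l \<theta> act (n - 1) x b)"
  show ?case
  proof (cases "Suc m = k")
    case True
    then show ?thesis using seed[of u] Suc.prems path_sum_same_layer[of u l k i] i by auto
  next
    case False
    then have km: "k \<le> m" "Suc m \<le> L" using Suc.prems by auto
    then obtain m' where m': "m = Suc m'" using k by (cases m) auto
    have "dnet l \<theta> act act' (Suc m) x u h =
        (\<Sum>j = 1..l m. ?C (Suc m) u j * dnet l \<theta> act act' m x j h)"
      using wgt_other_layer[of "Suc m" u] bias_other_layer[of "Suc m" u] km Suc.prems False
      unfolding m' by (auto intro!: sum.cong)
    also have "\<dots> = c * (\<Sum>j = 1..l m. ?C (Suc m) u j * path_sum l ?C k i m j)"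
      using Suc.IH km by (auto simp: sum_distrib_left intro!: sum.cong)
    also have "\<dots> = c * path_sum l ?C k i (Suc m) u"
      using path_sum_Suc[OF km(1), of u l] Suc.prems by simp
    finally show ?thesis .
  qed
qed

lemma sqerr_deriv_path_sum:
  assumes i: "i \<in> {1..l k}"
    and seed: "\<And>u. u \<in> {1..l k} \<Longrightarrow> dnet l \<theta> act act' k x u h = (if u = i then c else 0)"
  shows "(\<Sum>u = 1..l L. 2 * (net l \<theta> act L x u - f x u) * dnet l \<theta> act act' L x u h) =
    (\<Sum>v\<in>PiE {k..L} (\<lambda>w. {1..l w}). c * (2 * (indicator {i} (v k) :: real)
       * (net l \<theta> act L x (v L) - f x (v L))
       * (\<Prod>n\<in>{k+1..L}. wgt l \<theta> n (v n) (v (n - 1)) * act' (n - 1) (net l \<theta> act (n - 1) x (v (n - 1))))))"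
proof -
  let ?C = "\<lambda>n a b. wgt l \<theta> n a b * act' (n - 1) (net l \<theta> act (n - 1) x b)"
  have "(\<Sum>u = 1..l L. 2 * (net l \<theta> act L x u - f x u) * dnet l \<theta> act act' L x u h)
      = (\<Sum>u = 1..l L. (2 * c * (net l \<theta> act L x u - f x u)) * path_sum l ?C k i L u)"
    using dnet_path_sum[OF i seed] k by (auto simp: ac_simps intro!: sum.cong)
  also have "\<dots> = (\<Sum>v\<in>PiE {k..L} (\<lambda>w. {1..l w}). (indicator {i} (v k) :: real)
      * (2 * c * (net l \<theta> act L x (v L) - f x (v L))) * (\<Prod>n\<in>{k+1..L}. ?C n (v n) (v (n - 1))))"
    by (rule sum_path_sum) (use k in auto)
  also have "\<dots> = (\<Sum>v\<in>PiE {k..L} (\<lambda>w. {1..l w}). c * (2 * (indicator {i} (v k) :: real)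
       * (net l \<theta> act L x (v L) - f x (v L)) * (\<Prod>n\<in>{k+1..L}. ?C n (v n) (v (n - 1)))))"
    by (rule sum.cong[OF refl]) (simp only: ac_simps)
  finally show ?thesis .
qed

lemma dnet_weight_direction:
  assumes i: "i \<in> {1..l k}" and j: "j \<in> {1..l (k - 1)}"
    and p_eq: "p = (i - 1) * l (k - 1) + j + dsum l (k - 1)" and u: "u \<in> {1..l k}"
  shows "dnet l \<theta> act act' k x u h =
     (if u = i then (if k = 1 then x j else act (k - 1) (net l \<theta> act (k - 1) x j)) else 0)"
proof -
  have k1: "1 \<le> k" using k by simp
  have "bias l h k u = 0"
  proof -
    let ?q = "l k * l (k - 1) + u + dsum l (k - 1)"
    have "?q \<noteq> p" using bias_index_bounds[where l=l, OF k1 u] weight_index_bounds[where l=l, OF k1 i j] p_eq by auto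
    then show ?thesis using unit_in_block[OF k] bias_index_bounds[where l=l, OF k1 u] unfolding bias_def by auto
  qed
  moreover have "wgt l h k u j' = (if u = i \<and> j' = j then 1 else 0)" if j': "j' \<in> {1..l (k - 1)}" for j'
  proof -
    let ?q = "(u - 1) * l (k - 1) + j' + dsum l (k - 1)"
    have "?q = p \<longleftrightarrow> u = i \<and> j' = j"
      using mult_add_eq_imp_eq[of j' "l (k - 1)" j "u - 1" "i - 1"] j j' u i p_eq by auto
    then show ?thesis using unit_in_block[OF k] weight_index_block[where l=l, OF k1 u j'] unfolding wgt_def by auto
  qed
  moreover have "(\<Sum>j' = 1..l (k - 1). (if u = i \<and> j' = j then 1 else 0) * y j')
      = (if u = i then y j else 0)" for y :: "nat \<Rightarrow> real"
  proof -
    have "(if u = i \<and> j' = j then 1 else 0) * y j' = (if u = i \<and> j' = j then y j' else 0)" for j'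
      by simp
    then show ?thesis using j by (cases "u = i") (simp_all add: sum.delta')
  qed
  moreover have "dnet l \<theta> act act' (k - 1) x j' h = 0" if "j' \<in> {1..l (k - 1)}" for j'
    using dnet_below_layer[of "k - 1" j'] that k1 by simp
  moreover have "k = 1 \<or> (\<exists>k'. k = Suc (Suc k'))" using k1 by presburger
  ultimately show ?thesis by (elim disjE exE) (auto intro!: sum.cong)
qed

lemma dnet_bias_direction:
  assumes i: "i \<in> {1..l k}" and p_eq: "p = l k * l (k - 1) + i + dsum l (k - 1)" and u: "u \<in> {1..l k}"
  shows "dnet l \<theta> act act' k x u h = (if u = i then 1 else 0)"
proof -
  have k1: "1 \<le> k" using k by simp
  have "bias l h k u = (if u = i then 1 else 0)"
    using unit_in_block[OF k] bias_index_bounds[where l=l, OF k1 u] p_eq unfolding bias_def by auto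
  moreover have "wgt l h k u j = 0" if j: "j \<in> {1..l (k - 1)}" for j
  proof -
    let ?q = "(u - 1) * l (k - 1) + j + dsum l (k - 1)"
    have "?q \<noteq> p" using bias_index_bounds[where l=l, OF k1 i] weight_index_bounds[where l=l, OF k1 u j] p_eq by auto
    then show ?thesis using unit_in_block[OF k] weight_index_block[where l=l, OF k1 u j] unfolding wgt_def by auto
  qed
  moreover have "dnet l \<theta> act act' (k - 1) x j h = 0" if "j \<in> {1..l (k - 1)}" for j
    using dnet_below_layer[of "k - 1" j] that k1 by simp
  moreover have "k = 1 \<or> (\<exists>k'. k = Suc (Suc k'))" using k1 by presburger
  ultimately show ?thesis by (elim disjE exE) auto
qed

end

section \<open>Smoothed ReLU activations\<close>

lemma C1_differentiable_on_UNIV_deriv: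
  fixes g :: "real \<Rightarrow> real"
  assumes "g C1_differentiable_on UNIV"
  shows "(g has_real_derivative deriv g y) (at y)" and "continuous_on UNIV (deriv g)"
proof -
  have d: "g differentiable at x" and c: "continuous_on UNIV (\<lambda>x. vector_derivative g (at x))" for x
    using assms unfolding C1_differentiable_on_eq by auto
  show dg: "(g has_real_derivative deriv g y) (at y)" for y
    using d DERIV_deriv_iff_real_differentiable by blast
  have "vector_derivative g (at x) = deriv g x" for x
    using dg[of x] by (intro vector_derivative_at) (simp add: has_real_derivative_iff_has_vector_derivative)
  then show "continuous_on UNIV (deriv g)" using c by simp
qed

lemma one_le_root_powr: "1 \<le> (r::real) \<Longrightarrow> 1 \<le> r powr (1 / real k)"
  by (rule ge_one_powr_ge_zero) auto

lemma le_root_powr: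
  fixes c r :: real
  assumes c: "0 < c" and k: "1 \<le> k" and r: "c ^ k \<le> r"
  shows "c \<le> r powr (1 / real k)"
proof -
  have "c = (c ^ k) powr (1 / real k)"
    using c k by (simp add: powr_realpow[symmetric] powr_powr)
  also have "\<dots> \<le> r powr (1 / real k)"
    using r c by (intro powr_mono2) auto
  finally show ?thesis .
qed

text \<open>The derivative of ReLU, with value \<open>0\<close> at the kink: this is the pointwise limit of the
  derivatives of the smoothed activations, which vanish near \<open>0\<close>.\<close>

definition dactInf :: "nat \<Rightarrow> real \<Rightarrow> real" where
  "dactInf k y = (if 0 < y then 1 else 0)"

locale smoothed_relu =
  fixes A B :: real and R :: "real \<Rightarrow> real \<Rightarrow> real"
  assumes A_pos: "0 < A" and A_less_B: "A < B"
    and R_C1: "\<forall>r\<ge>1. R r C1_differentiable_on UNIV"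
    and R_zero: "\<forall>r\<ge>1. \<forall>x. x \<le> A / r \<longrightarrow> R r x = 0"
    and R_bounds: "\<forall>r\<ge>1. \<forall>y. 0 \<le> R r y \<and> R r y \<le> max y 0"
    and R_id: "\<forall>r\<ge>1. \<forall>z. B / r \<le> z \<longrightarrow> R r z = z"
    and R_deriv_bdd: "\<exists>C. \<forall>r\<ge>1. \<forall>x. \<bar>deriv (R r) x\<bar> \<le> C"
begin

definition dactR :: "real \<Rightarrow> nat \<Rightarrow> real \<Rightarrow> real" where
  "dactR r k = deriv (R (r powr (1 / real k)))"

definition deriv_bound :: real where
  "deriv_bound = max 1 (SOME C. \<forall>r\<ge>1. \<forall>x. \<bar>deriv (R r) x\<bar> \<le> C)"

lemma one_le_deriv_bound: "1 \<le> deriv_bound"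
  unfolding deriv_bound_def by simp

lemma abs_deriv_R_le: "1 \<le> s \<Longrightarrow> \<bar>deriv (R s) y\<bar> \<le> deriv_bound"
  using someI_ex[OF R_deriv_bdd] unfolding deriv_bound_def by (meson max.coboundedI2 order_trans)

lemma
  assumes r: "1 \<le> r"
  shows has_real_derivative_actR: "(actR R r k has_real_derivative dactR r k y) (at y)"
    and continuous_on_actR: "continuous_on UNIV (actR R r k)"
    and continuous_on_dactR: "continuous_on UNIV (dactR r k)"
    and abs_actR_le: "\<bar>actR R r k y\<bar> \<le> \<bar>y\<bar>"
    and abs_dactR_le: "\<bar>dactR r k y\<bar> \<le> deriv_bound"
proof -
  let ?s = "r powr (1 / real k)"
  have s: "1 \<le> ?s" using one_le_root_powr[OF r] .
  then have C1: "R ?s C1_differentiable_on UNIV" using R_C1 by blast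
  show d: "(actR R r k has_real_derivative dactR r k y) (at y)" for y
    unfolding actR_def dactR_def by (rule C1_differentiable_on_UNIV_deriv(1)[OF C1])
  show "continuous_on UNIV (actR R r k)"
    using d by (intro continuous_at_imp_continuous_on) (auto intro: DERIV_isCont)
  show "continuous_on UNIV (dactR r k)"
    unfolding dactR_def by (rule C1_differentiable_on_UNIV_deriv(2)[OF C1])
  show "\<bar>actR R r k y\<bar> \<le> \<bar>y\<bar>"
    using R_bounds s unfolding actR_def by (smt (verit))
  show "\<bar>dactR r k y\<bar> \<le> deriv_bound"
    unfolding dactR_def by (rule abs_deriv_R_le[OF s])
qed

lemma actR_eventually_eq:
  assumes k: "1 \<le> k"
  shows "\<forall>\<^sub>F r in at_top. actR R r k y = actInf k y"
proof (cases "y \<le> 0")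
  case True
  show ?thesis using eventually_ge_at_top[of 1]
  proof eventually_elim
    case (elim r)
    have s: "1 \<le> r powr (1 / real k)" by (rule one_le_root_powr[OF elim])
    have "y \<le> A / r powr (1 / real k)" using True A_pos s by (smt (verit) divide_nonneg_pos)
    then show ?case using True R_zero s unfolding actR_def actInf_def relu_def by simp
  qed
next
  case False
  then have y: "0 < y" by simp
  show ?thesis using eventually_ge_at_top[of "max 1 ((B / y) ^ k)"]
  proof eventually_elim
    case (elim r)
    have s: "1 \<le> r powr (1 / real k)" using one_le_root_powr[of r] elim by simp
    have "B / y \<le> r powr (1 / real k)" using y A_pos A_less_B elim by (intro le_root_powr[OF _ k]) auto
    then have "B / r powr (1 / real k) \<le> y" using y s A_pos A_less_B
      by (simp add: divide_le_eq field_simps)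
    then show ?case using y R_id s unfolding actR_def actInf_def relu_def by simp
  qed
qed

lemma dactR_eventually_eq:
  assumes k: "1 \<le> k"
  shows "\<forall>\<^sub>F r in at_top. dactR r k y = dactInf k y"
proof (cases "y \<le> 0")
  case True
  show ?thesis using eventually_ge_at_top[of 1]
  proof eventually_elim
    case (elim r)
    let ?s = "r powr (1 / real k)"
    have s: "1 \<le> ?s" by (rule one_le_root_powr[OF elim])
    have "0 < A / ?s" using A_pos s by (intro divide_pos_pos) auto
    then have "y \<in> {..<A / ?s}" using True by simp
    then have "\<forall>\<^sub>F z in nhds y. R ?s z = 0"
      using R_zero s eventually_nhds_in_open[of "{..<A / ?s}" y]
      by (auto elim!: eventually_mono)
    then have "deriv (R ?s) y = deriv (\<lambda>_. 0) y" by (rule deriv_cong_ev) simp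
    then show ?case using True unfolding dactR_def dactInf_def by simp
  qed
next
  case False
  then have y: "0 < y" by simp
  show ?thesis using eventually_ge_at_top[of "max 1 ((2 * B / y) ^ k)"]
  proof eventually_elim
    case (elim r)
    let ?s = "r powr (1 / real k)"
    have s: "1 \<le> ?s" using one_le_root_powr[of r] elim by simp
    have "2 * B / y \<le> ?s" using y A_pos A_less_B elim by (intro le_root_powr[OF _ k]) auto
    then have "y \<in> {B / ?s<..}" using y s A_pos A_less_B
      by (simp add: divide_le_eq divide_less_eq field_simps)
    then have "\<forall>\<^sub>F z in nhds y. R ?s z = z"
      using R_id s eventually_nhds_in_open[of "{B / ?s<..}" y]
      by (auto elim!: eventually_mono)
    then have "deriv (R ?s) y = deriv (\<lambda>z. z) y" by (rule deriv_cong_ev) simp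
    then show ?case using y unfolding dactR_def dactInf_def by simp
  qed
qed

lemma net_actR_eventually_eq: "\<forall>\<^sub>F r in at_top. net l \<theta> (actR R r) k x i = net l \<theta> actInf k x i"
proof (induction k arbitrary: i rule: layer_induct)
  case (Suc_Suc k)
  have "\<forall>\<^sub>F r in at_top. \<forall>j\<in>{1..l (Suc k)}. net l \<theta> (actR R r) (Suc k) x j = net l \<theta> actInf (Suc k) x j
      \<and> actR R r (Suc k) (net l \<theta> actInf (Suc k) x j) = actInf (Suc k) (net l \<theta> actInf (Suc k) x j)"
    using Suc_Suc.IH(2) actR_eventually_eq[of "Suc k"]
    by (intro eventually_ball_finite eventually_conj ballI) auto
  then show ?case by eventually_elim (auto intro!: sum.cong)
qed simp_all

lemma dnet_actR_eventually_eq: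
  "\<forall>\<^sub>F r in at_top. dnet l \<theta> (actR R r) (dactR r) k x i h = dnet l \<theta> actInf dactInf k x i h"
proof (induction k arbitrary: i rule: layer_induct)
  case (Suc_Suc k)
  let ?N = "\<lambda>j. net l \<theta> actInf (Suc k) x j"
  have "\<forall>\<^sub>F r in at_top. \<forall>j\<in>{1..l (Suc k)}. net l \<theta> (actR R r) (Suc k) x j = ?N j
      \<and> actR R r (Suc k) (?N j) = actInf (Suc k) (?N j) \<and> dactR r (Suc k) (?N j) = dactInf (Suc k) (?N j)
      \<and> dnet l \<theta> (actR R r) (dactR r) (Suc k) x j h = dnet l \<theta> actInf dactInf (Suc k) x j h"
    using Suc_Suc.IH(2) actR_eventually_eq[of "Suc k"] dactR_eventually_eq[of "Suc k"]
      net_actR_eventually_eq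
    by (intro eventually_ball_finite eventually_conj ballI) auto
  then show ?case by eventually_elim (auto intro!: sum.cong)
qed simp_all

end

section \<open>The loss and its gradient\<close>

lemma blinfun_apply_eq_inner_axis:
  fixes D :: "(real^'n) \<Rightarrow>\<^sub>L real"
  shows "blinfun_apply D h = (\<chi> q. D (axis q 1)) \<bullet> h"
proof -
  have "blinfun_apply D h = blinfun_apply D (\<Sum>q\<in>UNIV. h $ q *\<^sub>R axis q 1)"
    using basis_expansion[of h] by (simp add: scalar_mult_eq_scaleR)
  also have "\<dots> = (\<chi> q. D (axis q 1)) \<bullet> h"
    by (simp add: blinfun.sum_right blinfun.scaleR_right inner_vec_def mult.commute)
  finally show ?thesis .
qed

lemma grad_eq_blinfun:
  fixes F :: "(real^'n) \<Rightarrow> real" and D :: "(real^'n) \<Rightarrow>\<^sub>L real"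
  assumes "(F has_derivative blinfun_apply D) (at x)"
  shows "grad F x = (\<chi> q. D (axis q 1))"
  unfolding grad_def
proof (rule the_equality)
  show "(F has_derivative (\<lambda>h. (\<chi> q. D (axis q 1)) \<bullet> h)) (at x)"
    using assms by (simp add: blinfun_apply_eq_inner_axis[symmetric])
  fix g assume "(F has_derivative (\<lambda>h. g \<bullet> h)) (at x)"
  then have "(\<lambda>h. g \<bullet> h) = blinfun_apply D"
    using assms by (rule has_derivative_unique)
  then have "g \<bullet> axis q 1 = D (axis q 1)" for q by metis
  then show "g = (\<chi> q. D (axis q 1))" by (simp add: vec_eq_iff inner_axis)
qed

lemma has_real_derivative_along_line:
  fixes F :: "(real^'n) \<Rightarrow> real" and D :: "(real^'n) \<Rightarrow>\<^sub>L real"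
  assumes "(F has_derivative blinfun_apply D) (at x)"
  shows "((\<lambda>t. F (x + t *\<^sub>R e)) has_real_derivative D e) (at 0)"
proof -
  have "((\<lambda>t::real. x + t *\<^sub>R e) has_derivative (\<lambda>t. t *\<^sub>R e)) (at 0)"
    by (auto intro!: derivative_eq_intros)
  then have "((F \<circ> (\<lambda>t. x + t *\<^sub>R e)) has_derivative (blinfun_apply D \<circ> (\<lambda>t. t *\<^sub>R e))) (at 0)"
    by (rule diff_chain_at) (use assms in simp)
  then have "((\<lambda>t. F (x + t *\<^sub>R e)) has_derivative (\<lambda>t. D e * t)) (at 0)"
    by (simp add: comp_def blinfun.scaleR_right mult.commute)
  then show ?thesis by (simp add: has_field_derivative_def)
qed

lemma integrable_bounded_mult:
  fixes g \<phi> :: "'a \<Rightarrow> real"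
  assumes g: "integrable M g" and \<phi>: "\<phi> \<in> borel_measurable M"
    and bnd: "\<And>x. x \<in> space M \<Longrightarrow> \<bar>\<phi> x\<bar> \<le> K"
  shows "integrable M (\<lambda>x. \<phi> x * g x)"
proof (rule Bochner_Integration.integrable_bound[of _ "\<lambda>x. K * g x"])
  show "integrable M (\<lambda>x. K * g x)" using g by simp
  show "(\<lambda>x. \<phi> x * g x) \<in> borel_measurable M" using \<phi> g by measurable
  show "AE x in M. norm (\<phi> x * g x) \<le> norm (K * g x)"
  proof (rule AE_I2)
    fix x assume "x \<in> space M"
    then have "\<bar>\<phi> x\<bar> \<le> \<bar>K\<bar>" using bnd by fastforce
    then show "norm (\<phi> x * g x) \<le> norm (K * g x)" by (simp add: abs_mult mult_right_mono)
  qed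
qed

lemma square_add_le: "(p + q)\<^sup>2 \<le> 2 * p\<^sup>2 + 2 * (q::real)\<^sup>2"
proof -
  have "0 \<le> (p - q)\<^sup>2" by simp
  then show ?thesis by (simp add: power2_sum power2_diff)
qed

lemma abs_prod_le_power:
  fixes g :: "nat \<Rightarrow> real"
  assumes "\<And>n. n \<in> S \<Longrightarrow> \<bar>g n\<bar> \<le> c"
  shows "\<bar>\<Prod>n\<in>S. g n\<bar> \<le> c ^ card S"
proof -
  have "\<bar>\<Prod>n\<in>S. g n\<bar> = (\<Prod>n\<in>S. \<bar>g n\<bar>)" by (rule abs_prod)
  also have "\<dots> \<le> (\<Prod>n\<in>S. c)" using assms by (intro prod_mono) auto
  finally show ?thesis by simp
qed

locale relu_network_loss = smoothed_relu A B R
  for A B :: real and R :: "real \<Rightarrow> real \<Rightarrow> real" +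
  fixes L :: nat and l :: "nat \<Rightarrow> nat" and a b :: real and idx :: "nat \<Rightarrow> 'd::finite"
    and \<mu> :: "(nat \<Rightarrow> real) measure" and f :: "(nat \<Rightarrow> real) \<Rightarrow> nat \<Rightarrow> real"
  assumes idx_bij: "bij_betw idx {1..dsum l L} UNIV"
    and mu_sets: "sets \<mu> = sets (restrict_space borel (PiE {1..l 0} (\<lambda>_. {a..b})))"
    and mu_finite: "emeasure \<mu> (space \<mu>) < \<infinity>"
    and f_meas: "\<forall>i\<in>{1..l L}. (\<lambda>x. f x i) \<in> borel_measurable \<mu>"
    and int_r: "\<forall>r\<ge>1. \<forall>\<phi>. integrable \<mu>
                  (\<lambda>x. \<Sum>i = 1..l L. (net l (coords idx \<phi>) (actR R r) L x i - f x i)\<^sup>2)"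
    and int_inf: "\<forall>\<phi>. integrable \<mu>
                  (\<lambda>x. \<Sum>i = 1..l L. (net l (coords idx \<phi>) actInf L x i - f x i)\<^sup>2)"
begin

definition input_bound :: real where
  "input_bound = max \<bar>a\<bar> \<bar>b\<bar>"

lemma space_mu: "space \<mu> = PiE {1..l 0} (\<lambda>_. {a..b})"
  using sets_eq_imp_space_eq[OF mu_sets] by (simp add: space_restrict_space)

lemma abs_input_le: "x \<in> space \<mu> \<Longrightarrow> j \<in> {1..l 0} \<Longrightarrow> \<bar>x j\<bar> \<le> input_bound"
  unfolding space_mu input_bound_def by (auto simp: PiE_def Pi_def)

lemma borel_measurable_input: "(\<lambda>x. x j) \<in> borel_measurable \<mu>"
proof -
  have "(\<lambda>x::nat \<Rightarrow> real. x j) \<in> borel_measurable borel"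
    by (rule borel_measurable_continuous_onI) simp
  then show ?thesis
    by (subst measurable_cong_sets[OF mu_sets refl]) (rule measurable_restrict_space1)
qed

lemma finite_measure_mu: "finite_measure \<mu>"
  using mu_finite by (intro finite_measureI) auto

definition activation_pair :: "(nat \<Rightarrow> real \<Rightarrow> real) \<Rightarrow> (nat \<Rightarrow> real \<Rightarrow> real) \<Rightarrow> bool" where
  "activation_pair act act' \<longleftrightarrow>
     (\<forall>k. act k \<in> borel_measurable borel \<and> act' k \<in> borel_measurable borel)
     \<and> (\<forall>k y. \<bar>act k y\<bar> \<le> \<bar>y\<bar> \<and> \<bar>act' k y\<bar> \<le> deriv_bound)"

lemma activation_pair_actR: "1 \<le> r \<Longrightarrow> activation_pair (actR R r) (dactR r)"
  unfolding activation_pair_def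
  using continuous_on_actR continuous_on_dactR abs_actR_le abs_dactR_le
  by (auto intro: borel_measurable_continuous_onI)

lemma activation_pair_actInf: "activation_pair actInf dactInf"
proof -
  have "dactInf k \<in> borel_measurable borel" for k
  proof -
    have "dactInf k = indicator {0<..}" by (auto simp: dactInf_def indicator_def)
    then show ?thesis by simp
  qed
  moreover have "actInf k \<in> borel_measurable borel" for k
    unfolding actInf_def relu_def by (intro borel_measurable_continuous_onI continuous_intros)
  moreover have "\<bar>actInf k y\<bar> \<le> \<bar>y\<bar>" "\<bar>dactInf k y\<bar> \<le> deriv_bound" for k y
    using one_le_deriv_bound by (auto simp: actInf_def relu_def dactInf_def)
  ultimately show ?thesis unfolding activation_pair_def by blast
qed

lemma abs_net_le_on_space:
  assumes "activation_pair act act'" "norm v \<le> M" "x \<in> space \<mu>"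
  shows "\<bar>net l (coords idx v) act k x i\<bar> \<le> net_bound l M input_bound k"
proof (rule abs_net_le)
  show "\<bar>coords idx v p\<bar> \<le> M" for p
    using component_le_norm_cart[of v "idx p"] assms(2) unfolding coords_def by linarith
qed (use assms abs_input_le in \<open>auto simp: activation_pair_def\<close>)

lemma abs_dnet_le_on_space:
  assumes "activation_pair act act'" "norm v \<le> M" "x \<in> space \<mu>"
  shows "\<bar>dnet l (coords idx v) act act' k x i (coords idx h)\<bar>
    \<le> dnet_bound l M input_bound deriv_bound k * norm h"
proof (rule abs_dnet_le)
  show "\<bar>coords idx v p\<bar> \<le> M" for p
    using component_le_norm_cart[of v "idx p"] assms(2) unfolding coords_def by linarith
  show "\<bar>coords idx h p\<bar> \<le> norm h" for p
    unfolding coords_def by (rule component_le_norm_cart)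
qed (use assms abs_input_le in \<open>auto simp: activation_pair_def\<close>)

definition sqerr :: "(nat \<Rightarrow> real \<Rightarrow> real) \<Rightarrow> (nat \<Rightarrow> real) \<Rightarrow> (nat \<Rightarrow> real) \<Rightarrow> real" where
  "sqerr act \<theta> x = (\<Sum>u = 1..l L. (net l \<theta> act L x u - f x u)\<^sup>2)"

definition sqerr_deriv :: "(nat \<Rightarrow> real \<Rightarrow> real) \<Rightarrow> (nat \<Rightarrow> real \<Rightarrow> real)
    \<Rightarrow> (nat \<Rightarrow> real) \<Rightarrow> (nat \<Rightarrow> real) \<Rightarrow> (nat \<Rightarrow> real) \<Rightarrow> real" where
  "sqerr_deriv act act' \<theta> x h =
     (\<Sum>u = 1..l L. 2 * (net l \<theta> act L x u - f x u) * dnet l \<theta> act act' L x u h)"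

lemma loss_eq_integral_sqerr: "loss l L \<mu> f act \<theta> = (\<integral>x. sqerr act \<theta> x \<partial>\<mu>)"
  unfolding loss_def sqerr_def ..

lemma integrable_sqerr_actR: "1 \<le> r \<Longrightarrow> integrable \<mu> (sqerr (actR R r) (coords idx v))"
  using int_r unfolding sqerr_def by blast

lemma integrable_sqerr_actInf: "integrable \<mu> (sqerr actInf (coords idx v))"
  using int_inf unfolding sqerr_def by blast

lemma integrable_net_minus_f:
  assumes sq: "integrable \<mu> (sqerr act \<theta>)" and act: "\<And>k. act k \<in> borel_measurable borel"
    and u: "u \<in> {1..l L}"
  shows "integrable \<mu> (\<lambda>x. net l \<theta> act L x u - f x u)"
proof -
  let ?d = "\<lambda>x. net l \<theta> act L x u - f x u"
  have "(\<lambda>x. f x u) \<in> borel_measurable \<mu>" using f_meas u by blast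
  then have d_meas: "?d \<in> borel_measurable \<mu>"
    by (intro borel_measurable_diff borel_measurable_net[OF borel_measurable_input act])
  have "integrable \<mu> (\<lambda>x. (?d x)\<^sup>2)"
  proof (rule Bochner_Integration.integrable_bound[OF sq])
    show "(\<lambda>x. (?d x)\<^sup>2) \<in> borel_measurable \<mu>" using d_meas by (rule borel_measurable_power)
    show "AE x in \<mu>. norm ((?d x)\<^sup>2) \<le> norm (sqerr act \<theta> x)"
    proof (rule AE_I2)
      fix x
      have "(?d x)\<^sup>2 \<le> sqerr act \<theta> x" unfolding sqerr_def using u by (intro member_le_sum) auto
      moreover have "0 \<le> sqerr act \<theta> x" unfolding sqerr_def by (intro sum_nonneg) simp
      ultimately show "norm ((?d x)\<^sup>2) \<le> norm (sqerr act \<theta> x)" by simp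
    qed
  qed
  then have "integrable \<mu> (\<lambda>x. 1 + (?d x)\<^sup>2)"
    by (rule Bochner_Integration.integrable_add[OF finite_measure.integrable_const[OF finite_measure_mu]])
  moreover have "\<bar>t\<bar> \<le> 1 + t\<^sup>2" for t :: real
    using zero_le_power2[of "\<bar>t\<bar> - 1"] by (simp add: power2_diff)
  then have "AE x in \<mu>. norm (?d x) \<le> norm (1 + (?d x)\<^sup>2)"
    by (intro AE_I2) simp
  ultimately show ?thesis
    using Bochner_Integration.integrable_bound d_meas by blast
qed

lemma integrable_f:
  assumes u: "u \<in> {1..l L}"
  shows "integrable \<mu> (\<lambda>x. f x u)"
proof -
  let ?n = "\<lambda>x. net l (coords idx 0) actInf L x u"
  have act: "activation_pair actInf dactInf" by (rule activation_pair_actInf)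
  have "integrable \<mu> ?n"
  proof (rule finite_measure.integrable_const_bound[OF finite_measure_mu])
    show "AE x in \<mu>. norm (?n x) \<le> net_bound l 0 input_bound L"
      using abs_net_le_on_space[OF act] by (intro AE_I2) simp
    show "?n \<in> borel_measurable \<mu>"
      using act by (intro borel_measurable_net borel_measurable_input) (simp add: activation_pair_def)
  qed
  moreover have "integrable \<mu> (\<lambda>x. ?n x - f x u)"
    using act integrable_sqerr_actInf u by (intro integrable_net_minus_f) (auto simp: activation_pair_def)
  ultimately have "integrable \<mu> (\<lambda>x. ?n x - (?n x - f x u))"
    by (rule Bochner_Integration.integrable_diff)
  then show ?thesis by simp
qed

definition sqerr_deriv_bound :: "real \<Rightarrow> (nat \<Rightarrow> real) \<Rightarrow> real" where
  "sqerr_deriv_bound M x = (\<Sum>u = 1..l L.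
     2 * (\<bar>net_bound l M input_bound L\<bar> + \<bar>f x u\<bar>) * \<bar>dnet_bound l M input_bound deriv_bound L\<bar>)"

lemma integrable_sqerr_deriv_bound: "integrable \<mu> (sqerr_deriv_bound M)"
  unfolding sqerr_deriv_bound_def
  using integrable_f finite_measure.integrable_const[OF finite_measure_mu]
  by (intro Bochner_Integration.integrable_sum Bochner_Integration.integrable_mult_left
      Bochner_Integration.integrable_mult_right Bochner_Integration.integrable_add integrable_abs) auto

lemma abs_sqerr_deriv_le:
  assumes act: "activation_pair act act'" and v: "norm v \<le> M" and x: "x \<in> space \<mu>"
  shows "\<bar>sqerr_deriv act act' (coords idx v) x (coords idx h)\<bar> \<le> sqerr_deriv_bound M x * norm h"
proof -
  let ?N = "net_bound l M input_bound L" and ?D = "dnet_bound l M input_bound deriv_bound L"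
  have "\<bar>2 * (net l (coords idx v) act L x u - f x u) * dnet l (coords idx v) act act' L x u (coords idx h)\<bar>
      \<le> 2 * (\<bar>?N\<bar> + \<bar>f x u\<bar>) * (\<bar>?D\<bar> * norm h)" for u
  proof -
    have "\<bar>net l (coords idx v) act L x u - f x u\<bar> \<le> \<bar>?N\<bar> + \<bar>f x u\<bar>"
      using abs_net_le_on_space[OF act v x, of L u] by linarith
    moreover have "\<bar>dnet l (coords idx v) act act' L x u (coords idx h)\<bar> \<le> \<bar>?D\<bar> * norm h"
      using abs_dnet_le_on_space[OF act v x, of L u h] abs_ge_self[of ?D]
      by (meson mult_right_mono norm_ge_zero order_trans)
    ultimately show ?thesis unfolding abs_mult by (intro mult_mono) auto
  qed
  then have "\<bar>sqerr_deriv act act' (coords idx v) x (coords idx h)\<bar>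
      \<le> (\<Sum>u = 1..l L. 2 * (\<bar>?N\<bar> + \<bar>f x u\<bar>) * (\<bar>?D\<bar> * norm h))"
    unfolding sqerr_deriv_def by (intro order_trans[OF sum_abs] sum_mono)
  then show ?thesis
    by (simp add: sqerr_deriv_bound_def sum_distrib_right mult.assoc)
qed

lemma has_derivative_sqerr:
  assumes "\<And>k y. (act k has_real_derivative act' k y) (at y)"
  shows "((\<lambda>v. sqerr act (coords idx v) x) has_derivative
           (\<lambda>h. sqerr_deriv act act' (coords idx v) x (coords idx h))) (at v)"
  unfolding sqerr_def sqerr_deriv_def
  by (auto intro!: derivative_eq_intros has_derivative_net[OF assms]
      simp: fun_eq_iff sum_distrib_left algebra_simps)

lemma borel_measurable_sqerr_deriv:
  assumes "activation_pair act act'"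
  shows "(\<lambda>x. sqerr_deriv act act' \<theta> x h) \<in> borel_measurable \<mu>"
proof -
  have "(\<lambda>x. net l \<theta> act L x u) \<in> borel_measurable \<mu>"
    and "(\<lambda>x. dnet l \<theta> act act' L x u h) \<in> borel_measurable \<mu>" for u
    using assms by (auto intro!: borel_measurable_net borel_measurable_dnet borel_measurable_input
        simp: activation_pair_def)
  then show ?thesis
    unfolding sqerr_deriv_def using f_meas by (auto intro!: borel_measurable_sum)
qed

lemma continuous_on_sqerr_deriv_actR:
  assumes r: "1 \<le> r"
  shows "continuous_on UNIV (\<lambda>v. sqerr_deriv (actR R r) (dactR r) (coords idx v) x (coords idx h))"
proof -
  have "continuous_on UNIV (\<lambda>v. net l (coords idx v) (actR R r) L x u)"
    and "continuous_on UNIV (\<lambda>v. dnet l (coords idx v) (actR R r) (dactR r) L x u (coords idx h))" for u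
    using continuous_on_actR[OF r] continuous_on_dactR[OF r]
    by (blast intro: continuous_on_net continuous_on_dnet)+
  then show ?thesis unfolding sqerr_deriv_def by (intro continuous_intros) auto
qed

lemma loss_actR_C1:
  assumes r: "1 \<le> r"
  obtains D :: "(real^'d) \<Rightarrow> ((real^'d) \<Rightarrow>\<^sub>L real)"
  where "\<And>v. ((\<lambda>u. loss l L \<mu> f (actR R r) (coords idx u)) has_derivative blinfun_apply (D v)) (at v)"
    and "continuous_on UNIV D"
    and "\<And>v h. D v h = (\<integral>x. sqerr_deriv (actR R r) (dactR r) (coords idx v) x (coords idx h) \<partial>\<mu>)"
proof -
  have dom: "\<exists>e>0. \<exists>g. integrable \<mu> g \<and> (\<forall>v\<in>ball v0 e. \<forall>x\<in>space \<mu>. \<forall>h.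
      \<bar>sqerr_deriv (actR R r) (dactR r) (coords idx v) x (coords idx h)\<bar> \<le> g x * norm h)" for v0
  proof -
    have "norm v \<le> norm v0 + 1" if "v \<in> ball v0 1" for v :: "real^'d"
      using that norm_triangle_sub[of v v0] by (simp add: dist_norm norm_minus_commute)
    then have "\<forall>v\<in>ball v0 1. \<forall>x\<in>space \<mu>. \<forall>h.
        \<bar>sqerr_deriv (actR R r) (dactR r) (coords idx v) x (coords idx h)\<bar>
        \<le> sqerr_deriv_bound (norm v0 + 1) x * norm h"
      using abs_sqerr_deriv_le[OF activation_pair_actR[OF r]] by blast
    then show ?thesis
      using integrable_sqerr_deriv_bound
      by (intro exI[of _ 1] conjI exI[of _ "sqerr_deriv_bound (norm v0 + 1)"]) simp_all
  qed
  have der: "\<And>v x. x \<in> space \<mu> \<Longrightarrow> ((\<lambda>v. sqerr (actR R r) (coords idx v) x) has_derivative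
      (\<lambda>h. sqerr_deriv (actR R r) (dactR r) (coords idx v) x (coords idx h))) (at v)"
    by (rule has_derivative_sqerr[OF has_real_derivative_actR[OF r]])
  show thesis
  proof (rule integral_continuously_differentiable[where F="\<lambda>v. sqerr (actR R r) (coords idx v)"
        and F'="\<lambda>v x h. sqerr_deriv (actR R r) (dactR r) (coords idx v) x (coords idx h)",
        OF der borel_measurable_sqerr_deriv[OF activation_pair_actR[OF r]] integrable_sqerr_actR[OF r]
        continuous_on_sqerr_deriv_actR[OF r] dom])
    fix D :: "(real^'d) \<Rightarrow> ((real^'d) \<Rightarrow>\<^sub>L real)"
    assume "\<And>v. ((\<lambda>v. \<integral>x. sqerr (actR R r) (coords idx v) x \<partial>\<mu>) has_derivative blinfun_apply (D v)) (at v)"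
      and "continuous_on UNIV D"
      and "\<And>v h. D v h = (\<integral>x. sqerr_deriv (actR R r) (dactR r) (coords idx v) x (coords idx h) \<partial>\<mu>)"
    then show thesis by (rule that[unfolded loss_eq_integral_sqerr])
  qed
qed

lemma grad_loss_actR:
  assumes "1 \<le> r"
  shows "grad (\<lambda>v. loss l L \<mu> f (actR R r) (coords idx v)) \<theta>
    = (\<chi> q. \<integral>x. sqerr_deriv (actR R r) (dactR r) (coords idx \<theta>) x (coords idx (axis q 1)) \<partial>\<mu>)"
proof -
  obtain D where D: "\<And>v. ((\<lambda>u. loss l L \<mu> f (actR R r) (coords idx u)) has_derivative blinfun_apply (D v)) (at v)"
    and "\<And>v h. D v h = (\<integral>x. sqerr_deriv (actR R r) (dactR r) (coords idx v) x (coords idx h) \<partial>\<mu>)"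
    by (rule loss_actR_C1[OF assms]) blast
  then show ?thesis unfolding grad_eq_blinfun[OF D] by simp
qed

definition grad_inf :: "real^'d \<Rightarrow> real^'d" where
  "grad_inf \<theta> = (\<chi> q. \<integral>x. sqerr_deriv actInf dactInf (coords idx \<theta>) x (coords idx (axis q 1)) \<partial>\<mu>)"

lemma sqerr_actR_eventually_eq:
  "\<forall>\<^sub>F r in at_top. sqerr (actR R r) \<theta> x = sqerr actInf \<theta> x"
proof -
  have "\<forall>\<^sub>F r in at_top. \<forall>u\<in>{1..l L}. net l \<theta> (actR R r) L x u = net l \<theta> actInf L x u"
    using net_actR_eventually_eq by (intro eventually_ball_finite ballI) auto
  then show ?thesis unfolding sqerr_def by eventually_elim (auto intro!: sum.cong)
qed

lemma sqerr_deriv_actR_eventually_eq: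
  "\<forall>\<^sub>F r in at_top. sqerr_deriv (actR R r) (dactR r) \<theta> x h = sqerr_deriv actInf dactInf \<theta> x h"
proof -
  have "\<forall>\<^sub>F r in at_top. \<forall>u\<in>{1..l L}. net l \<theta> (actR R r) L x u = net l \<theta> actInf L x u
      \<and> dnet l \<theta> (actR R r) (dactR r) L x u h = dnet l \<theta> actInf dactInf L x u h"
    using net_actR_eventually_eq dnet_actR_eventually_eq
    by (intro eventually_ball_finite eventually_conj ballI) auto
  then show ?thesis unfolding sqerr_deriv_def by eventually_elim (auto intro!: sum.cong)
qed

text \<open>The smoothed network coincides with the ReLU network at every point for all large \<open>r\<close>,
  so the limits below follow by dominated convergence; \<open>max t 1\<close> only makes the
  integrands measurable for every \<open>t\<close>.\<close>

lemma integral_sqerr_deriv_tendsto: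
  "((\<lambda>r. \<integral>x. sqerr_deriv (actR R r) (dactR r) (coords idx \<theta>) x (coords idx h) \<partial>\<mu>)
     \<longlongrightarrow> (\<integral>x. sqerr_deriv actInf dactInf (coords idx \<theta>) x (coords idx h) \<partial>\<mu>)) at_top"
proof -
  define s where "s t x = sqerr_deriv (actR R (max t 1)) (dactR (max t 1)) (coords idx \<theta>) x (coords idx h)"
    for t x
  have "((\<lambda>t. \<integral>x. s t x \<partial>\<mu>) \<longlongrightarrow> (\<integral>x. sqerr_deriv actInf dactInf (coords idx \<theta>) x (coords idx h) \<partial>\<mu>)) at_top"
  proof (rule integral_dominated_convergence_at_top[where w="\<lambda>x. sqerr_deriv_bound (norm \<theta>) x * norm h"])
    show "(\<lambda>x. sqerr_deriv actInf dactInf (coords idx \<theta>) x (coords idx h)) \<in> borel_measurable \<mu>"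
      by (rule borel_measurable_sqerr_deriv[OF activation_pair_actInf])
    show "s t \<in> borel_measurable \<mu>" for t
      unfolding s_def by (rule borel_measurable_sqerr_deriv[OF activation_pair_actR]) simp
    show "integrable \<mu> (\<lambda>x. sqerr_deriv_bound (norm \<theta>) x * norm h)"
      using integrable_sqerr_deriv_bound by simp
    show "AE x in \<mu>. ((\<lambda>t. s t x) \<longlongrightarrow> sqerr_deriv actInf dactInf (coords idx \<theta>) x (coords idx h)) at_top"
    proof (rule AE_I2)
      fix x
      have "\<forall>\<^sub>F t in at_top. s t x = sqerr_deriv actInf dactInf (coords idx \<theta>) x (coords idx h)"
        using eventually_ge_at_top[of 1] sqerr_deriv_actR_eventually_eq
        by eventually_elim (simp add: s_def)
      then show "((\<lambda>t. s t x) \<longlongrightarrow> sqerr_deriv actInf dactInf (coords idx \<theta>) x (coords idx h)) at_top"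
        by (rule tendsto_eventually)
    qed
    show "\<forall>\<^sub>F t in at_top. AE x in \<mu>. norm (s t x) \<le> sqerr_deriv_bound (norm \<theta>) x * norm h"
      unfolding s_def using abs_sqerr_deriv_le[OF activation_pair_actR]
      by (intro always_eventually allI AE_I2) simp
  qed
  moreover have "\<forall>\<^sub>F t in at_top. (\<integral>x. s t x \<partial>\<mu>)
      = (\<integral>x. sqerr_deriv (actR R t) (dactR t) (coords idx \<theta>) x (coords idx h) \<partial>\<mu>)"
    using eventually_ge_at_top[of 1] by eventually_elim (simp add: s_def max_absorb1)
  ultimately show ?thesis by (rule Lim_transform_eventually)
qed

lemma grad_loss_actR_tendsto:
  "((\<lambda>r. grad (\<lambda>v. loss l L \<mu> f (actR R r) (coords idx v)) \<theta>) \<longlongrightarrow> grad_inf \<theta>) at_top"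
proof (rule vec_tendstoI)
  fix q
  have "\<forall>\<^sub>F r in at_top. (\<integral>x. sqerr_deriv (actR R r) (dactR r) (coords idx \<theta>) x (coords idx (axis q 1)) \<partial>\<mu>)
      = grad (\<lambda>v. loss l L \<mu> f (actR R r) (coords idx v)) \<theta> $ q"
    using eventually_ge_at_top[of 1] by eventually_elim (simp add: grad_loss_actR)
  then show "((\<lambda>r. grad (\<lambda>v. loss l L \<mu> f (actR R r) (coords idx v)) \<theta> $ q) \<longlongrightarrow> grad_inf \<theta> $ q) at_top"
    unfolding grad_inf_def vec_lambda_beta
    using integral_sqerr_deriv_tendsto by (rule Lim_transform_eventually[rotated])
qed

lemma sqerr_actR_le:
  assumes r: "1 \<le> r" and x: "x \<in> space \<mu>"
  shows "sqerr (actR R r) (coords idx \<theta>) x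
    \<le> real (l L) * (8 * (net_bound l (norm \<theta>) input_bound L)\<^sup>2) + 2 * sqerr actInf (coords idx \<theta>) x"
proof -
  let ?N = "net_bound l (norm \<theta>) input_bound L"
  have "(net l (coords idx \<theta>) (actR R r) L x u - f x u)\<^sup>2
      \<le> 8 * ?N\<^sup>2 + 2 * (net l (coords idx \<theta>) actInf L x u - f x u)\<^sup>2" for u
  proof -
    let ?p = "net l (coords idx \<theta>) (actR R r) L x u - net l (coords idx \<theta>) actInf L x u"
      and ?q = "net l (coords idx \<theta>) actInf L x u - f x u"
    have "\<bar>?p\<bar> \<le> \<bar>2 * ?N\<bar>"
      using abs_net_le_on_space[OF activation_pair_actR[OF r] _ x, of \<theta> "norm \<theta>" L u]
        abs_net_le_on_space[OF activation_pair_actInf _ x, of \<theta> "norm \<theta>" L u] by linarith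
    then have "?p\<^sup>2 \<le> 4 * ?N\<^sup>2" by (simp add: abs_le_square_iff power_mult_distrib)
    moreover have "(net l (coords idx \<theta>) (actR R r) L x u - f x u)\<^sup>2 = (?p + ?q)\<^sup>2" by simp
    ultimately show ?thesis using square_add_le[of ?p ?q] by linarith
  qed
  then have "sqerr (actR R r) (coords idx \<theta>) x
      \<le> (\<Sum>u = 1..l L. 8 * ?N\<^sup>2 + 2 * (net l (coords idx \<theta>) actInf L x u - f x u)\<^sup>2)"
    unfolding sqerr_def by (rule sum_mono)
  then show ?thesis by (simp add: sqerr_def sum.distrib sum_distrib_left)
qed

lemma loss_actR_tendsto:
  "((\<lambda>r. loss l L \<mu> f (actR R r) (coords idx \<theta>)) \<longlongrightarrow> loss l L \<mu> f actInf (coords idx \<theta>)) at_top"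
proof -
  define s where "s t = sqerr (actR R (max t 1)) (coords idx \<theta>)" for t
  define w where "w x = real (l L) * (8 * (net_bound l (norm \<theta>) input_bound L)\<^sup>2)
    + 2 * sqerr actInf (coords idx \<theta>) x" for x
  have "((\<lambda>t. \<integral>x. s t x \<partial>\<mu>) \<longlongrightarrow> (\<integral>x. sqerr actInf (coords idx \<theta>) x \<partial>\<mu>)) at_top"
  proof (rule integral_dominated_convergence_at_top[where w=w])
    show "sqerr actInf (coords idx \<theta>) \<in> borel_measurable \<mu>"
      using integrable_sqerr_actInf by blast
    show "s t \<in> borel_measurable \<mu>" for t
      unfolding s_def using integrable_sqerr_actR[of "max t 1"] by auto
    show "integrable \<mu> w"
      unfolding w_def using integrable_sqerr_actInf finite_measure.integrable_const[OF finite_measure_mu]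
      by (intro Bochner_Integration.integrable_add Bochner_Integration.integrable_mult_right) auto
    show "AE x in \<mu>. ((\<lambda>t. s t x) \<longlongrightarrow> sqerr actInf (coords idx \<theta>) x) at_top"
    proof (rule AE_I2)
      fix x
      have "\<forall>\<^sub>F t in at_top. s t x = sqerr actInf (coords idx \<theta>) x"
        using eventually_ge_at_top[of 1] sqerr_actR_eventually_eq by eventually_elim (simp add: s_def)
      then show "((\<lambda>t. s t x) \<longlongrightarrow> sqerr actInf (coords idx \<theta>) x) at_top"
        by (rule tendsto_eventually)
    qed
    have "0 \<le> s t x" for t x unfolding s_def sqerr_def by (intro sum_nonneg) simp
    then show "\<forall>\<^sub>F t in at_top. AE x in \<mu>. norm (s t x) \<le> w x"
      using sqerr_actR_le unfolding s_def w_def by (intro always_eventually allI AE_I2) simp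
  qed
  moreover have "\<forall>\<^sub>F t in at_top. (\<integral>x. s t x \<partial>\<mu>) = loss l L \<mu> f (actR R t) (coords idx \<theta>)"
    using eventually_ge_at_top[of 1] by eventually_elim (simp add: s_def loss_eq_integral_sqerr max_absorb1)
  ultimately show ?thesis unfolding loss_eq_integral_sqerr by (rule Lim_transform_eventually)
qed

lemma Limsup_loss_grad_error_eq_0:
  assumes "((\<lambda>r. grad (\<lambda>v. loss l L \<mu> f (actR R r) (coords idx v)) \<theta>) \<longlongrightarrow> g) at_top"
  shows "Limsup at_top (\<lambda>r. ereal (\<bar>loss l L \<mu> f (actR R r) (coords idx \<theta>) - loss l L \<mu> f actInf (coords idx \<theta>)\<bar>
      + norm (grad (\<lambda>v. loss l L \<mu> f (actR R r) (coords idx v)) \<theta> - g))) = 0"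
proof -
  have "((\<lambda>r. loss l L \<mu> f (actR R r) (coords idx \<theta>) - loss l L \<mu> f actInf (coords idx \<theta>)) \<longlongrightarrow> 0) at_top"
    using tendsto_diff[OF loss_actR_tendsto[of \<theta>] tendsto_const[of "loss l L \<mu> f actInf (coords idx \<theta>)"]]
    by simp
  moreover have "((\<lambda>r. grad (\<lambda>v. loss l L \<mu> f (actR R r) (coords idx v)) \<theta> - g) \<longlongrightarrow> 0) at_top"
    using tendsto_diff[OF assms tendsto_const[of g]] by simp
  ultimately have "((\<lambda>r. ereal (\<bar>loss l L \<mu> f (actR R r) (coords idx \<theta>) - loss l L \<mu> f actInf (coords idx \<theta>)\<bar>
      + norm (grad (\<lambda>v. loss l L \<mu> f (actR R r) (coords idx v)) \<theta> - g))) \<longlongrightarrow> ereal 0) at_top"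
    by (intro tendsto_ereal tendsto_add_zero tendsto_rabs_zero tendsto_norm_zero)
  then show ?thesis by (simp add: lim_imp_Limsup zero_ereal_def)
qed

section \<open>Partial derivatives along single parameters\<close>

definition path_term :: "(nat \<Rightarrow> real \<Rightarrow> real) \<Rightarrow> (nat \<Rightarrow> real \<Rightarrow> real) \<Rightarrow> (nat \<Rightarrow> real)
    \<Rightarrow> nat \<Rightarrow> nat \<Rightarrow> (nat \<Rightarrow> real) \<Rightarrow> (nat \<Rightarrow> nat) \<Rightarrow> real" where
  "path_term act act' \<theta> k i x v = 2 * (indicator {i} (v k) :: real) * (net l \<theta> act L x (v L) - f x (v L))
     * (\<Prod>n\<in>{k+1..L}. wgt l \<theta> n (v n) (v (n - 1)) * act' (n - 1) (net l \<theta> act (n - 1) x (v (n - 1))))"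

text \<open>The factor by which a weight of layer \<open>k\<close> is multiplied in the network: the input
  \<open>x j\<close> for \<open>k = 1\<close>, the activated neuron \<open>j\<close> of layer \<open>k - 1\<close> otherwise.\<close>

definition weight_seed :: "(nat \<Rightarrow> real \<Rightarrow> real) \<Rightarrow> (nat \<Rightarrow> real) \<Rightarrow> nat \<Rightarrow> nat \<Rightarrow> (nat \<Rightarrow> real) \<Rightarrow> real"
  where "weight_seed act \<theta> k j x = act (max (k - 1) 1) (net l \<theta> act (max (k - 1) 1) x j)
     * (indicator {1<..L} k :: real) + x j * (indicator {1} k :: real)"

lemma weight_seed_eq:
  assumes "k \<in> {1..L}"
  shows "weight_seed act \<theta> k j x = (if k = 1 then x j else act (k - 1) (net l \<theta> act (k - 1) x j))"
proof (cases "k = 1")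
  case False
  then have "max (k - 1) 1 = k - 1" and "k \<in> {1<..L}" using assms by auto
  with False show ?thesis unfolding weight_seed_def by (simp del: net.simps)
qed (simp add: weight_seed_def)

lemma borel_measurable_weight_seed:
  assumes "activation_pair act act'"
  shows "(\<lambda>x. weight_seed act \<theta> k j x) \<in> borel_measurable \<mu>"
proof -
  have am: "act m \<in> borel_measurable borel" for m using assms by (simp add: activation_pair_def)
  have "(\<lambda>x. act (max (k - 1) 1) (net l \<theta> act (max (k - 1) 1) x j)) \<in> borel_measurable \<mu>"
    by (rule measurable_compose[OF borel_measurable_net[OF borel_measurable_input am] am])
  then show ?thesis
    unfolding weight_seed_def
    by (intro borel_measurable_add borel_measurable_times borel_measurable_const borel_measurable_input)
qed

lemma abs_weight_seed_le:
  assumes act: "activation_pair act act'" and j: "j \<in> {1..l (k - 1)}" and x: "x \<in> space \<mu>"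
  shows "\<bar>weight_seed act (coords idx \<theta>) k j x\<bar>
    \<le> net_bound l (norm \<theta>) input_bound (max (k - 1) 1) + input_bound"
proof -
  let ?n = "net l (coords idx \<theta>) act (max (k - 1) 1) x j"
    and ?N = "net_bound l (norm \<theta>) input_bound (max (k - 1) 1)"
  have n: "\<bar>?n\<bar> \<le> ?N"
    by (rule abs_net_le_on_space[OF act _ x]) simp
  moreover have "\<bar>act (max (k - 1) 1) ?n\<bar> \<le> \<bar>?n\<bar>"
    using act by (simp add: activation_pair_def)
  ultimately have "\<bar>act (max (k - 1) 1) ?n * (indicator {1<..L} k :: real)\<bar> \<le> ?N"
    using order_trans[OF abs_ge_zero n] by (simp add: indicator_def)
  moreover have "\<bar>x j * (indicator {1} k :: real)\<bar> \<le> input_bound"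
    using abs_input_le[OF x] j by (cases "k = 1") (auto simp: input_bound_def)
  ultimately show ?thesis
    unfolding weight_seed_def
    using abs_triangle_ineq[of "act (max (k - 1) 1) ?n * (indicator {1<..L} k :: real)"
        "x j * (indicator {1} k :: real)"] by linarith
qed

lemma unit_direction_axis:
  assumes "k \<in> {1..L}" "dsum l (k - 1) < p" "p \<le> dsum l k"
  shows "unit_direction l L k p (coords idx (axis (idx p) 1))"
proof
  have p: "p \<in> {1..dsum l L}" using assms dsum_mono[of k L l] by auto
  show "\<forall>q\<in>{1..dsum l L}. coords idx (axis (idx p) 1) q = (if q = p then 1 else 0)"
    using inj_on_eq_iff[OF bij_betw_imp_inj_on[OF idx_bij] _ p] by (auto simp: coords_def axis_def)
qed (use assms in auto)

lemma
  assumes act: "activation_pair act act'"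
  shows borel_measurable_path_gain: "(\<lambda>x. \<Prod>n\<in>S. wgt l (coords idx \<theta>) n (v n) (v (n - 1))
      * act' (n - 1) (net l (coords idx \<theta>) act (n - 1) x (v (n - 1)))) \<in> borel_measurable \<mu>"
    and abs_path_gain_le: "\<bar>\<Prod>n\<in>S. wgt l (coords idx \<theta>) n (v n) (v (n - 1))
      * act' (n - 1) (net l (coords idx \<theta>) act (n - 1) x (v (n - 1)))\<bar> \<le> (norm \<theta> * deriv_bound) ^ card S"
proof -
  have am: "act m \<in> borel_measurable borel" "act' m \<in> borel_measurable borel"
    and ab: "\<bar>act' m y\<bar> \<le> deriv_bound" for m y
    using act by (auto simp: activation_pair_def)
  show "(\<lambda>x. \<Prod>n\<in>S. wgt l (coords idx \<theta>) n (v n) (v (n - 1))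
      * act' (n - 1) (net l (coords idx \<theta>) act (n - 1) x (v (n - 1)))) \<in> borel_measurable \<mu>"
  proof (rule borel_measurable_prod)
    fix n
    show "(\<lambda>x. wgt l (coords idx \<theta>) n (v n) (v (n - 1))
        * act' (n - 1) (net l (coords idx \<theta>) act (n - 1) x (v (n - 1)))) \<in> borel_measurable \<mu>"
      by (rule borel_measurable_times[OF borel_measurable_const
            measurable_compose[OF borel_measurable_net[OF borel_measurable_input am(1)] am(2)]])
  qed
  show "\<bar>\<Prod>n\<in>S. wgt l (coords idx \<theta>) n (v n) (v (n - 1))
      * act' (n - 1) (net l (coords idx \<theta>) act (n - 1) x (v (n - 1)))\<bar> \<le> (norm \<theta> * deriv_bound) ^ card S"
  proof (rule abs_prod_le_power)
    fix n
    have "\<bar>wgt l (coords idx \<theta>) n (v n) (v (n - 1))\<bar> \<le> norm \<theta>"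
      unfolding wgt_def coords_def by (rule component_le_norm_cart)
    then show "\<bar>wgt l (coords idx \<theta>) n (v n) (v (n - 1))
        * act' (n - 1) (net l (coords idx \<theta>) act (n - 1) x (v (n - 1)))\<bar> \<le> norm \<theta> * deriv_bound"
      unfolding abs_mult using ab by (intro mult_mono) auto
  qed
qed

lemma integrable_seed_path_term:
  assumes act: "activation_pair act act'" and sq: "integrable \<mu> (sqerr act (coords idx \<theta>))"
    and k: "k \<le> L" and v: "v \<in> PiE {k..L} (\<lambda>w. {1..l w})"
    and c: "c \<in> borel_measurable \<mu>" "\<And>x. x \<in> space \<mu> \<Longrightarrow> \<bar>c x\<bar> \<le> K"
  shows "integrable \<mu> (\<lambda>x. c x * path_term act act' (coords idx \<theta>) k i x v)"
proof -
  let ?P = "\<lambda>x. \<Prod>n\<in>{k+1..L}. wgt l (coords idx \<theta>) n (v n) (v (n - 1))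
     * act' (n - 1) (net l (coords idx \<theta>) act (n - 1) x (v (n - 1)))"
  have "v L \<in> {1..l L}" using v k by (auto simp: PiE_def Pi_def)
  then have d: "integrable \<mu> (\<lambda>x. net l (coords idx \<theta>) act L x (v L) - f x (v L))"
    using sq act by (intro integrable_net_minus_f) (auto simp: activation_pair_def)
  have "\<bar>c x * (2 * (indicator {i} (v k) :: real)) * ?P x\<bar>
      \<le> \<bar>K\<bar> * 2 * (norm \<theta> * deriv_bound) ^ card {k+1..L}" if "x \<in> space \<mu>" for x
  proof -
    have "\<bar>c x\<bar> \<le> \<bar>K\<bar>" using c(2)[OF that] by linarith
    moreover have "\<bar>2 * (indicator {i} (v k) :: real)\<bar> \<le> 2" by (simp add: indicator_def)
    ultimately show ?thesis
      unfolding abs_mult using abs_path_gain_le[OF act, where S="{k+1..L}" and x=x and v=v and \<theta>=\<theta>]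
      by (intro mult_mono) auto
  qed
  then have "integrable \<mu> (\<lambda>x. (c x * (2 * (indicator {i} (v k) :: real)) * ?P x)
      * (net l (coords idx \<theta>) act L x (v L) - f x (v L)))"
    using c(1) borel_measurable_path_gain[OF act]
    by (intro integrable_bounded_mult[OF d] borel_measurable_times borel_measurable_const)
  then show ?thesis by (simp only: path_term_def mult_ac)
qed

lemma integral_sqerr_deriv_unit:
  assumes act: "activation_pair act act'" and sq: "integrable \<mu> (sqerr act (coords idx \<theta>))"
    and dir: "unit_direction l L k p h" and i: "i \<in> {1..l k}"
    and seed: "\<And>x u. x \<in> space \<mu> \<Longrightarrow> u \<in> {1..l k} \<Longrightarrow>
      dnet l (coords idx \<theta>) act act' k x u h = (if u = i then c x else 0)"
    and c: "c \<in> borel_measurable \<mu>" "\<And>x. x \<in> space \<mu> \<Longrightarrow> \<bar>c x\<bar> \<le> K"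
  shows "(\<integral>x. sqerr_deriv act act' (coords idx \<theta>) x h \<partial>\<mu>)
    = (\<Sum>v\<in>PiE {k..L} (\<lambda>w. {1..l w}). \<integral>x. c x * path_term act act' (coords idx \<theta>) k i x v \<partial>\<mu>)"
proof -
  have "sqerr_deriv act act' (coords idx \<theta>) x h
      = (\<Sum>v\<in>PiE {k..L} (\<lambda>w. {1..l w}). c x * path_term act act' (coords idx \<theta>) k i x v)"
    if "x \<in> space \<mu>" for x
    unfolding sqerr_deriv_def path_term_def
    by (rule unit_direction.sqerr_deriv_path_sum[OF dir i seed[OF that]])
  then have "(\<integral>x. sqerr_deriv act act' (coords idx \<theta>) x h \<partial>\<mu>)
      = (\<integral>x. (\<Sum>v\<in>PiE {k..L} (\<lambda>w. {1..l w}). c x * path_term act act' (coords idx \<theta>) k i x v) \<partial>\<mu>)"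
    by (intro Bochner_Integration.integral_cong) auto
  also have "\<dots> = (\<Sum>v\<in>PiE {k..L} (\<lambda>w. {1..l w}). \<integral>x. c x * path_term act act' (coords idx \<theta>) k i x v \<partial>\<mu>)"
    using unit_direction.k[OF dir] integrable_seed_path_term[OF act sq _ _ c]
    by (intro Bochner_Integration.integral_sum) auto
  finally show ?thesis .
qed

lemma integral_sqerr_deriv_weight:
  assumes act: "activation_pair act act'" and sq: "integrable \<mu> (sqerr act (coords idx \<theta>))"
    and k: "k \<in> {1..L}" and i: "i \<in> {1..l k}" and j: "j \<in> {1..l (k - 1)}"
  shows "(\<integral>x. sqerr_deriv act act' (coords idx \<theta>) x
           (coords idx (axis (idx ((i - 1) * l (k - 1) + j + dsum l (k - 1))) 1)) \<partial>\<mu>)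
    = (\<Sum>v\<in>PiE {k..L} (\<lambda>w. {1..l w}).
         \<integral>x. weight_seed act (coords idx \<theta>) k j x * path_term act act' (coords idx \<theta>) k i x v \<partial>\<mu>)"
proof -
  let ?p = "(i - 1) * l (k - 1) + j + dsum l (k - 1)"
  have k1: "1 \<le> k" using k by simp
  interpret dir: unit_direction l L k ?p "coords idx (axis (idx ?p) 1)"
    using weight_index_block[where l=l, OF k1 i j] k by (intro unit_direction_axis) auto
  show ?thesis
  proof (rule integral_sqerr_deriv_unit[OF act sq dir.unit_direction_axioms i _
        borel_measurable_weight_seed[OF act] abs_weight_seed_le[OF act j]])
    show "dnet l (coords idx \<theta>) act act' k x u (coords idx (axis (idx ?p) 1))
        = (if u = i then weight_seed act (coords idx \<theta>) k j x else 0)" if "u \<in> {1..l k}" for x u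
      using dir.dnet_weight_direction[OF i j refl that] weight_seed_eq[OF k] by simp
  qed
qed

lemma integral_sqerr_deriv_bias:
  assumes act: "activation_pair act act'" and sq: "integrable \<mu> (sqerr act (coords idx \<theta>))"
    and k: "k \<in> {1..L}" and i: "i \<in> {1..l k}"
  shows "(\<integral>x. sqerr_deriv act act' (coords idx \<theta>) x
           (coords idx (axis (idx (l k * l (k - 1) + i + dsum l (k - 1))) 1)) \<partial>\<mu>)
    = (\<Sum>v\<in>PiE {k..L} (\<lambda>w. {1..l w}). \<integral>x. path_term act act' (coords idx \<theta>) k i x v \<partial>\<mu>)"
proof -
  let ?p = "l k * l (k - 1) + i + dsum l (k - 1)"
  have k1: "1 \<le> k" using k by simp
  interpret dir: unit_direction l L k ?p "coords idx (axis (idx ?p) 1)"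
    using bias_index_bounds[where l=l, OF k1 i] k by (intro unit_direction_axis) auto
  have "(\<integral>x. sqerr_deriv act act' (coords idx \<theta>) x (coords idx (axis (idx ?p) 1)) \<partial>\<mu>)
    = (\<Sum>v\<in>PiE {k..L} (\<lambda>w. {1..l w}). \<integral>x. 1 * path_term act act' (coords idx \<theta>) k i x v \<partial>\<mu>)"
  proof (rule integral_sqerr_deriv_unit[where c="\<lambda>_. 1" and K=1, OF act sq dir.unit_direction_axioms i])
    show "dnet l (coords idx \<theta>) act act' k x u (coords idx (axis (idx ?p) 1)) = (if u = i then 1 else 0)"
      if "u \<in> {1..l k}" for x u
      by (rule dir.dnet_bias_direction[OF i refl that])
  qed simp_all
  then show ?thesis by simp
qed

lemma has_real_derivative_loss_actR_weight:
  assumes r: "1 \<le> r" and k: "k \<in> {1..L}" and i: "i \<in> {1..l k}" and j: "j \<in> {1..l (k - 1)}"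
  shows "((\<lambda>t. loss l L \<mu> f (actR R r)
                 (coords idx (\<theta> + t *\<^sub>R axis (idx ((i - 1) * l (k - 1) + j + dsum l (k - 1))) 1)))
          has_real_derivative
          (\<Sum>v\<in>PiE {k..L} (\<lambda>w. {1..l w}).
             \<integral>x. 2 * (R (r powr (1 / real (max (k - 1) 1)))
                         (net l (coords idx \<theta>) (actR R r) (max (k - 1) 1) x j)
                       * (indicator {1<..L} k :: real)
                       + x j * (indicator {1} k :: real))
                  * (indicator {i} (v k) :: real)
                  * (net l (coords idx \<theta>) (actR R r) L x (v L) - f x (v L))
                  * (\<Prod>n\<in>{k+1..L}. wgt l (coords idx \<theta>) n (v n) (v (n - 1))
                       * deriv (R (r powr (1 / real (n - 1))))
                           (net l (coords idx \<theta>) (actR R r) (n - 1) x (v (n - 1)))) \<partial>\<mu>))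
          (at 0)"
proof -
  obtain D where D: "\<And>v. ((\<lambda>u. loss l L \<mu> f (actR R r) (coords idx u)) has_derivative blinfun_apply (D v)) (at v)"
    and D_eq: "\<And>v h. D v h = (\<integral>x. sqerr_deriv (actR R r) (dactR r) (coords idx v) x (coords idx h) \<partial>\<mu>)"
    by (rule loss_actR_C1[OF r]) blast
  let ?e = "axis (idx ((i - 1) * l (k - 1) + j + dsum l (k - 1))) 1 :: real^'d"
  have "D \<theta> ?e = (\<Sum>v\<in>PiE {k..L} (\<lambda>w. {1..l w}). \<integral>x. weight_seed (actR R r) (coords idx \<theta>) k j x
      * path_term (actR R r) (dactR r) (coords idx \<theta>) k i x v \<partial>\<mu>)"
    unfolding D_eq by (rule integral_sqerr_deriv_weight[OF activation_pair_actR[OF r] integrable_sqerr_actR[OF r] k i j])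
  also have "\<dots> = (\<Sum>v\<in>PiE {k..L} (\<lambda>w. {1..l w}).
             \<integral>x. 2 * (R (r powr (1 / real (max (k - 1) 1)))
                         (net l (coords idx \<theta>) (actR R r) (max (k - 1) 1) x j)
                       * (indicator {1<..L} k :: real)
                       + x j * (indicator {1} k :: real))
                  * (indicator {i} (v k) :: real)
                  * (net l (coords idx \<theta>) (actR R r) L x (v L) - f x (v L))
                  * (\<Prod>n\<in>{k+1..L}. wgt l (coords idx \<theta>) n (v n) (v (n - 1))
                       * deriv (R (r powr (1 / real (n - 1))))
                           (net l (coords idx \<theta>) (actR R r) (n - 1) x (v (n - 1)))) \<partial>\<mu>)"
    by (intro sum.cong refl Bochner_Integration.integral_cong)
      (simp only: weight_seed_def path_term_def actR_def dactR_def mult_ac)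
  finally have "D \<theta> ?e = \<dots>" .
  then show ?thesis using has_real_derivative_along_line[OF D, of \<theta> ?e] by (rule subst)
qed

lemma has_real_derivative_loss_actR_bias:
  assumes r: "1 \<le> r" and k: "k \<in> {1..L}" and i: "i \<in> {1..l k}"
  shows "((\<lambda>t. loss l L \<mu> f (actR R r)
                 (coords idx (\<theta> + t *\<^sub>R axis (idx (l k * l (k - 1) + i + dsum l (k - 1))) 1)))
          has_real_derivative
          (\<Sum>v\<in>PiE {k..L} (\<lambda>w. {1..l w}).
             \<integral>x. 2 * (indicator {i} (v k) :: real)
                  * (net l (coords idx \<theta>) (actR R r) L x (v L) - f x (v L))
                  * (\<Prod>n\<in>{k+1..L}. wgt l (coords idx \<theta>) n (v n) (v (n - 1))
                       * deriv (R (r powr (1 / real (n - 1))))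
                           (net l (coords idx \<theta>) (actR R r) (n - 1) x (v (n - 1)))) \<partial>\<mu>))
          (at 0)"
proof -
  obtain D where D: "\<And>v. ((\<lambda>u. loss l L \<mu> f (actR R r) (coords idx u)) has_derivative blinfun_apply (D v)) (at v)"
    and D_eq: "\<And>v h. D v h = (\<integral>x. sqerr_deriv (actR R r) (dactR r) (coords idx v) x (coords idx h) \<partial>\<mu>)"
    by (rule loss_actR_C1[OF r]) blast
  let ?e = "axis (idx (l k * l (k - 1) + i + dsum l (k - 1))) 1 :: real^'d"
  have "D \<theta> ?e = (\<Sum>v\<in>PiE {k..L} (\<lambda>w. {1..l w}).
      \<integral>x. path_term (actR R r) (dactR r) (coords idx \<theta>) k i x v \<partial>\<mu>)"
    unfolding D_eq by (rule integral_sqerr_deriv_bias[OF activation_pair_actR[OF r] integrable_sqerr_actR[OF r] k i])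
  then show ?thesis using has_real_derivative_along_line[OF D, of \<theta> ?e]
    unfolding path_term_def dactR_def by (rule subst)
qed

lemma dactInf_net_eq_indicator:
  assumes "x \<in> space \<mu>"
  shows "dactInf n (net l \<theta> actInf n x u)
    = (indicator {y \<in> PiE {1..l 0} (\<lambda>_. {a..b}). 0 < net l \<theta> actInf n y u} x :: real)"
  using assms unfolding space_mu dactInf_def indicator_def by simp

lemma grad_inf_weight:
  assumes k: "k \<in> {1..L}" and i: "i \<in> {1..l k}" and j: "j \<in> {1..l (k - 1)}"
  shows "grad_inf \<theta> $ idx ((i - 1) * l (k - 1) + j + dsum l (k - 1)) =
          (\<Sum>v\<in>PiE {k..L} (\<lambda>w. {1..l w}).
             \<integral>x. 2 * (relu (net l (coords idx \<theta>) actInf (max (k - 1) 1) x j)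
                       * (indicator {1<..L} k :: real)
                       + x j * (indicator {1} k :: real))
                  * (indicator {i} (v k) :: real)
                  * (net l (coords idx \<theta>) actInf L x (v L) - f x (v L))
                  * (\<Prod>n\<in>{k+1..L}. wgt l (coords idx \<theta>) n (v n) (v (n - 1))
                       * (indicator {y \<in> PiE {1..l 0} (\<lambda>_. {a..b}).
                                        0 < net l (coords idx \<theta>) actInf (n - 1) y (v (n - 1))} x :: real)) \<partial>\<mu>)"
  unfolding grad_inf_def vec_lambda_beta
    integral_sqerr_deriv_weight[OF activation_pair_actInf integrable_sqerr_actInf k i j]
  by (intro sum.cong refl Bochner_Integration.integral_cong)
    (simp only: weight_seed_def path_term_def actInf_def dactInf_net_eq_indicator mult_ac)

lemma grad_inf_bias:
  assumes k: "k \<in> {1..L}" and i: "i \<in> {1..l k}"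
  shows "grad_inf \<theta> $ idx (l k * l (k - 1) + i + dsum l (k - 1)) =
          (\<Sum>v\<in>PiE {k..L} (\<lambda>w. {1..l w}).
             \<integral>x. 2 * (indicator {i} (v k) :: real)
                  * (net l (coords idx \<theta>) actInf L x (v L) - f x (v L))
                  * (\<Prod>n\<in>{k+1..L}. wgt l (coords idx \<theta>) n (v n) (v (n - 1))
                       * (indicator {y \<in> PiE {1..l 0} (\<lambda>_. {a..b}).
                                        0 < net l (coords idx \<theta>) actInf (n - 1) y (v (n - 1))} x :: real)) \<partial>\<mu>)"
  unfolding grad_inf_def vec_lambda_beta
    integral_sqerr_deriv_bias[OF activation_pair_actInf integrable_sqerr_actInf k i]
  by (intro sum.cong refl Bochner_Integration.integral_cong)
    (simp only: path_term_def dactInf_net_eq_indicator)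

end

theorem theorem2p9:
  fixes L :: nat and l :: "nat \<Rightarrow> nat" and a b A B :: real
    and idx :: "nat \<Rightarrow> 'd::finite"
    and R :: "real \<Rightarrow> real \<Rightarrow> real"
    and \<mu> :: "(nat \<Rightarrow> real) measure"
    and f :: "(nat \<Rightarrow> real) \<Rightarrow> nat \<Rightarrow> real"
    and G :: "real^'d \<Rightarrow> real^'d"
    and \<theta> :: "real^'d"
  assumes L_pos: "1 \<le> L"
    and l_pos: "\<forall>k. 1 \<le> l k"
    and ab: "a < b"
    and AB: "0 < A" "A < B"
    and idx_bij: "bij_betw idx {1..dsum l L} UNIV"
    and R_C1: "\<forall>r\<ge>1. R r C1_differentiable_on UNIV"
    and R_zero: "\<forall>r\<ge>1. \<forall>x. x \<le> A / r \<longrightarrow> R r x = 0"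
    and R_bounds: "\<forall>r\<ge>1. \<forall>y. 0 \<le> R r y \<and> R r y \<le> max y 0"
    and R_id: "\<forall>r\<ge>1. \<forall>z. B / r \<le> z \<longrightarrow> R r z = z"
    and R_deriv_bdd: "\<exists>C. \<forall>r\<ge>1. \<forall>x. \<bar>deriv (R r) x\<bar> \<le> C"
    and mu_sets: "sets \<mu> = sets (restrict_space borel (PiE {1..l 0} (\<lambda>_. {a..b})))"
    and mu_finite: "emeasure \<mu> (space \<mu>) < \<infinity>"
    and f_meas: "\<forall>i\<in>{1..l L}. (\<lambda>x. f x i) \<in> borel_measurable \<mu>"
    and int_r: "\<forall>r\<ge>1. \<forall>\<phi>. integrable \<mu>
                  (\<lambda>x. \<Sum>i = 1..l L. (net l (coords idx \<phi>) (actR R r) L x i - f x i)\<^sup>2)"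
    and int_inf: "\<forall>\<phi>. integrable \<mu>
                  (\<lambda>x. \<Sum>i = 1..l L. (net l (coords idx \<phi>) actInf L x i - f x i)\<^sup>2)"
    and G_def: "\<forall>\<phi>. (\<exists>g. ((\<lambda>r. grad (\<lambda>v. loss l L \<mu> f (actR R r) (coords idx v)) \<phi>) \<longlongrightarrow> g) at_top)
                  \<longrightarrow> ((\<lambda>r. grad (\<lambda>v. loss l L \<mu> f (actR R r) (coords idx v)) \<phi>) \<longlongrightarrow> G \<phi>) at_top"
  shows
    \<comment> \<open>(i)\<close>
    "(\<forall>r\<ge>1. \<exists>D :: (real^'d) \<Rightarrow> ((real^'d) \<Rightarrow>\<^sub>L real).
        (\<forall>v. ((\<lambda>u. loss l L \<mu> f (actR R r) (coords idx u)) has_derivative blinfun_apply (D v)) (at v))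
        \<and> continuous_on UNIV D)
    \<comment> \<open>(ii)\<close>
   \<and> (\<forall>r\<ge>1. \<forall>k\<in>{1..L}. \<forall>i\<in>{1..l k}. \<forall>j\<in>{1..l (k - 1)}.
        ((\<lambda>t. loss l L \<mu> f (actR R r)
                 (coords idx (\<theta> + t *\<^sub>R axis (idx ((i - 1) * l (k - 1) + j + dsum l (k - 1))) 1)))
          has_real_derivative
          (\<Sum>v\<in>PiE {k..L} (\<lambda>w. {1..l w}).
             \<integral>x. 2 * (R (r powr (1 / real (max (k - 1) 1)))
                         (net l (coords idx \<theta>) (actR R r) (max (k - 1) 1) x j)
                       * (indicator {1<..L} k :: real)
                       + x j * (indicator {1} k :: real))
                  * (indicator {i} (v k) :: real)
                  * (net l (coords idx \<theta>) (actR R r) L x (v L) - f x (v L))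
                  * (\<Prod>n\<in>{k+1..L}. wgt l (coords idx \<theta>) n (v n) (v (n - 1))
                       * deriv (R (r powr (1 / real (n - 1))))
                           (net l (coords idx \<theta>) (actR R r) (n - 1) x (v (n - 1)))) \<partial>\<mu>))
          (at 0))
    \<comment> \<open>(iii)\<close>
   \<and> (\<forall>r\<ge>1. \<forall>k\<in>{1..L}. \<forall>i\<in>{1..l k}.
        ((\<lambda>t. loss l L \<mu> f (actR R r)
                 (coords idx (\<theta> + t *\<^sub>R axis (idx (l k * l (k - 1) + i + dsum l (k - 1))) 1)))
          has_real_derivative
          (\<Sum>v\<in>PiE {k..L} (\<lambda>w. {1..l w}).
             \<integral>x. 2 * (indicator {i} (v k) :: real)
                  * (net l (coords idx \<theta>) (actR R r) L x (v L) - f x (v L))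
                  * (\<Prod>n\<in>{k+1..L}. wgt l (coords idx \<theta>) n (v n) (v (n - 1))
                       * deriv (R (r powr (1 / real (n - 1))))
                           (net l (coords idx \<theta>) (actR R r) (n - 1) x (v (n - 1)))) \<partial>\<mu>))
          (at 0))
    \<comment> \<open>(iv)\<close>
   \<and> Limsup at_top (\<lambda>r. ereal (\<bar>loss l L \<mu> f (actR R r) (coords idx \<theta>)
                                  - loss l L \<mu> f actInf (coords idx \<theta>)\<bar>
                + norm (grad (\<lambda>v. loss l L \<mu> f (actR R r) (coords idx v)) \<theta> - G \<theta>))) = 0
    \<comment> \<open>(v)\<close>
   \<and> (\<forall>k\<in>{1..L}. \<forall>i\<in>{1..l k}. \<forall>j\<in>{1..l (k - 1)}.
        G \<theta> $ idx ((i - 1) * l (k - 1) + j + dsum l (k - 1)) =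
          (\<Sum>v\<in>PiE {k..L} (\<lambda>w. {1..l w}).
             \<integral>x. 2 * (relu (net l (coords idx \<theta>) actInf (max (k - 1) 1) x j)
                       * (indicator {1<..L} k :: real)
                       + x j * (indicator {1} k :: real))
                  * (indicator {i} (v k) :: real)
                  * (net l (coords idx \<theta>) actInf L x (v L) - f x (v L))
                  * (\<Prod>n\<in>{k+1..L}. wgt l (coords idx \<theta>) n (v n) (v (n - 1))
                       * (indicator {y \<in> PiE {1..l 0} (\<lambda>_. {a..b}).
                                        0 < net l (coords idx \<theta>) actInf (n - 1) y (v (n - 1))} x :: real)) \<partial>\<mu>))
    \<comment> \<open>(vi)\<close>
   \<and> (\<forall>k\<in>{1..L}. \<forall>i\<in>{1..l k}.
        G \<theta> $ idx (l k * l (k - 1) + i + dsum l (k - 1)) =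
          (\<Sum>v\<in>PiE {k..L} (\<lambda>w. {1..l w}).
             \<integral>x. 2 * (indicator {i} (v k) :: real)
                  * (net l (coords idx \<theta>) actInf L x (v L) - f x (v L))
                  * (\<Prod>n\<in>{k+1..L}. wgt l (coords idx \<theta>) n (v n) (v (n - 1))
                       * (indicator {y \<in> PiE {1..l 0} (\<lambda>_. {a..b}).
                                        0 < net l (coords idx \<theta>) actInf (n - 1) y (v (n - 1))} x :: real)) \<partial>\<mu>))"
proof -
  interpret relu_network_loss A B R L l a b idx \<mu> f
    by (unfold_locales; fact assms)
  have grad_lim: "((\<lambda>r. grad (\<lambda>v. loss l L \<mu> f (actR R r) (coords idx v)) \<theta>) \<longlongrightarrow> grad_inf \<theta>) at_top"
    by (rule grad_loss_actR_tendsto)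
  then have "((\<lambda>r. grad (\<lambda>v. loss l L \<mu> f (actR R r) (coords idx v)) \<theta>) \<longlongrightarrow> G \<theta>) at_top"
    using G_def by blast
  then have G_eq: "G \<theta> = grad_inf \<theta>"
    using grad_lim by (rule tendsto_unique[OF trivial_limit_at_top_linorder])
  have C1: "\<exists>D :: (real^'d) \<Rightarrow> ((real^'d) \<Rightarrow>\<^sub>L real).
      (\<forall>v. ((\<lambda>u. loss l L \<mu> f (actR R r) (coords idx u)) has_derivative blinfun_apply (D v)) (at v))
      \<and> continuous_on UNIV D" if "1 \<le> r" for r
    by (rule loss_actR_C1[OF that]) blast
  show ?thesis
    unfolding G_eq
    by (intro conjI ballI allI impI)
      (rule C1 Limsup_loss_grad_error_eq_0[OF grad_lim] has_real_derivative_loss_actR_weight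
        has_real_derivative_loss_actR_bias grad_inf_weight grad_inf_bias; assumption)+
qed

end
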